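(* Let $M\preccurlyeq N$ be models of a complete affine theory $T$, with $M$ extremally $\aleph_0$-saturated. If $D\subseteq N^n$ is definable, then $C=D\cap M^n$ is definable in $M$ and $d(\bar x,D)=d(\bar x,C)$ for every $\bar x\in M^n$; in particular $(M,d(\cdot,C))\preccurlyeq(N,d(\cdot,D))$. Moreover, if $D\neq\emptyset$ then $C\neq\emptyset$.
   Context: Affine continuous logic: $L$-structures are complete metric spaces $(M,d)$ with $d\le1$ and Lipschitz interpretations of function symbols and $[0,1]$-valued relation symbols. Affine formulas are built from $1$ and atomic formulas (including $d$) using only $r\cdot\phi$ ($r\in\mathbb R$), $\phi+\psi$, $\inf_x$, $\sup_x$; $M\preccurlyeq N$ means every affine formula with parameters from $M$ has the same value in $M$ and $N$ (and for expansions by predicates, also the formulas in the expanded language). For $A\subseteq M$, an $n$-type over $A$ is a maximal set of conditions with parameters from $A$ satisfiable with the theory of $(M,a)_{a\in A}$, identified with a positive normalized linear functional on formulas; a type is extreme if it is an extreme point of the convex set $S_n(A)$. $M$ is extremally $\aleph_0$-saturated if for every finite $A\subseteq M$ every extreme type in $S_n(A)$ is realized in $M$. A predicate $P:N^n\to\mathbb R$ is definable (without parameters) if it is a uniform limit of $\phi_k^N$ for affine formulas $\phi_k$. A closed $D\subseteq N^n$ is definable if $\bar x\mapsto d(\bar x,D)=\inf_{\bar a\in D}d(\bar x,\bar a)$ is definable (with the convention that the infimum over the empty set of a predicate equals its sup-norm). *)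

theory Defs
  imports "HOL-Analysis.Analysis"
begin

datatype 'f trm = Var nat | Fn 'f "'f trm list"

datatype ('f, 'r) afm =
    One
  | Dst "'f trm" "'f trm"
  | Rel 'r "'f trm list"
  | Scl real "('f, 'r) afm"
  | Pls "('f, 'r) afm" "('f, 'r) afm"
  | InfQ nat "('f, 'r) afm"
  | SupQ nat "('f, 'r) afm"

fun wf_trm :: "('f \<Rightarrow> nat) \<Rightarrow> 'f trm \<Rightarrow> bool" where
  "wf_trm af (Var i) = True"
| "wf_trm af (Fn f ts) = (length ts = af f \<and> (\<forall>t\<in>set ts. wf_trm af t))"

fun wf_fm :: "('f \<Rightarrow> nat) \<Rightarrow> ('r \<Rightarrow> nat) \<Rightarrow> ('f, 'r) afm \<Rightarrow> bool" where
  "wf_fm af ar One = True"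
| "wf_fm af ar (Dst t u) = (wf_trm af t \<and> wf_trm af u)"
| "wf_fm af ar (Rel r ts) = (length ts = ar r \<and> (\<forall>t\<in>set ts. wf_trm af t))"
| "wf_fm af ar (Scl c \<phi>) = wf_fm af ar \<phi>"
| "wf_fm af ar (Pls \<phi> \<psi>) = (wf_fm af ar \<phi> \<and> wf_fm af ar \<psi>)"
| "wf_fm af ar (InfQ x \<phi>) = wf_fm af ar \<phi>"
| "wf_fm af ar (SupQ x \<phi>) = wf_fm af ar \<phi>"

fun fv_trm :: "'f trm \<Rightarrow> nat set" where
  "fv_trm (Var i) = {i}"
| "fv_trm (Fn f ts) = (\<Union>t\<in>set ts. fv_trm t)"

fun fv :: "('f, 'r) afm \<Rightarrow> nat set" where
  "fv One = {}"
| "fv (Dst t u) = fv_trm t \<union> fv_trm u"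
| "fv (Rel r ts) = (\<Union>t\<in>set ts. fv_trm t)"
| "fv (Scl c \<phi>) = fv \<phi>"
| "fv (Pls \<phi> \<psi>) = fv \<phi> \<union> fv \<psi>"
| "fv (InfQ x \<phi>) = fv \<phi> - {x}"
| "fv (SupQ x \<phi>) = fv \<phi> - {x}"

record ('a, 'f, 'r) struc =
  sc_carrier :: "'a set"
  sc_d :: "'a \<Rightarrow> 'a \<Rightarrow> real"
  sc_fn :: "'f \<Rightarrow> 'a list \<Rightarrow> 'a"
  sc_rel :: "'r \<Rightarrow> 'a list \<Rightarrow> real"

definition tuples :: "'a set \<Rightarrow> nat \<Rightarrow> 'a list set" where
  "tuples S n = {xs. length xs = n \<and> set xs \<subseteq> S}"

definition tdist :: "('a, 'f, 'r, 'z) struc_scheme \<Rightarrow> 'a list \<Rightarrow> 'a list \<Rightarrow> real" where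
  "tdist S xs ys = (\<Sum>i<length xs. sc_d S (xs ! i) (ys ! i))"

fun teval :: "('a, 'f, 'r, 'z) struc_scheme \<Rightarrow> (nat \<Rightarrow> 'a) \<Rightarrow> 'f trm \<Rightarrow> 'a" where
  "teval S \<rho> (Var i) = \<rho> i"
| "teval S \<rho> (Fn f ts) = sc_fn S f (map (teval S \<rho>) ts)"

fun eval :: "('a, 'f, 'r, 'z) struc_scheme \<Rightarrow> ('f, 'r) afm \<Rightarrow> (nat \<Rightarrow> 'a) \<Rightarrow> real" where
  "eval S One \<rho> = 1"
| "eval S (Dst t u) \<rho> = sc_d S (teval S \<rho> t) (teval S \<rho> u)"
| "eval S (Rel r ts) \<rho> = sc_rel S r (map (teval S \<rho>) ts)"
| "eval S (Scl c \<phi>) \<rho> = c * eval S \<phi> \<rho>"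
| "eval S (Pls \<phi> \<psi>) \<rho> = eval S \<phi> \<rho> + eval S \<psi> \<rho>"
| "eval S (InfQ x \<phi>) \<rho> = (INF a\<in>sc_carrier S. eval S \<phi> (\<rho>(x := a)))"
| "eval S (SupQ x \<phi>) \<rho> = (SUP a\<in>sc_carrier S. eval S \<phi> (\<rho>(x := a)))"

definition is_struc :: "('f \<Rightarrow> nat) \<Rightarrow> ('r \<Rightarrow> nat) \<Rightarrow> ('a, 'f, 'r) struc \<Rightarrow> bool" where
  "is_struc af ar S \<longleftrightarrow>
     (let C = sc_carrier S; d = sc_d S in
       C \<noteq> {}
     \<and> (\<forall>x\<in>C. \<forall>y\<in>C. 0 \<le> d x y \<and> d x y \<le> 1 \<and> d x y = d y x \<and> (d x y = 0 \<longleftrightarrow> x = y))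
     \<and> (\<forall>x\<in>C. \<forall>y\<in>C. \<forall>z\<in>C. d x z \<le> d x y + d y z)
     \<and> (\<forall>s::nat \<Rightarrow> 'a. (\<forall>i. s i \<in> C) \<and>
            (\<forall>e>0. \<exists>K. \<forall>m\<ge>K. \<forall>k\<ge>K. d (s m) (s k) < e)
          \<longrightarrow> (\<exists>x\<in>C. \<forall>e>0. \<exists>K. \<forall>m\<ge>K. d (s m) x < e))
     \<and> (\<forall>f. (\<forall>xs\<in>tuples C (af f). sc_fn S f xs \<in> C)
          \<and> (\<exists>L. \<forall>xs\<in>tuples C (af f). \<forall>ys\<in>tuples C (af f).
                  d (sc_fn S f xs) (sc_fn S f ys) \<le> L * tdist S xs ys))
     \<and> (\<forall>r. (\<forall>xs\<in>tuples C (ar r). 0 \<le> sc_rel S r xs \<and> sc_rel S r xs \<le> 1)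
          \<and> (\<exists>L. \<forall>xs\<in>tuples C (ar r). \<forall>ys\<in>tuples C (ar r).
                  \<bar>sc_rel S r xs - sc_rel S r ys\<bar> \<le> L * tdist S xs ys)))"

definition elem_ext :: "('f \<Rightarrow> nat) \<Rightarrow> ('r \<Rightarrow> nat) \<Rightarrow> ('a, 'f, 'r, 'z) struc_scheme
     \<Rightarrow> ('a, 'f, 'r, 'z) struc_scheme \<Rightarrow> bool" where
  "elem_ext af ar M N \<longleftrightarrow>
     sc_carrier M \<subseteq> sc_carrier N \<and>
     (\<forall>\<phi> \<rho>. wf_fm af ar \<phi> \<and> range \<rho> \<subseteq> sc_carrier M \<longrightarrow> eval M \<phi> \<rho> = eval N \<phi> \<rho>)"

definition fmfuns :: "('f \<Rightarrow> nat) \<Rightarrow> ('r \<Rightarrow> nat) \<Rightarrow> ('a, 'f, 'r) struc \<Rightarrow> nat \<Rightarrow> 'a set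
     \<Rightarrow> ('a list \<Rightarrow> real) set" where
  "fmfuns af ar M n A =
     {(\<lambda>xs. eval M \<phi> (\<lambda>i. if i < n then xs ! i else \<rho> i)) | \<phi> \<rho>.
        wf_fm af ar \<phi> \<and> (\<forall>i\<in>fv \<phi>. n \<le> i \<longrightarrow> \<rho> i \<in> A)}"

text \<open>The type space S_n(A), with types identified with positive normalized linear
  functionals on formulas (positivity relative to the theory of (M,a)_(a\<in>A):
  a formula which is \<ge> 0 on all of M^n gets a value \<ge> 0).  Functionals are taken
  to vanish off the space of formula-functions.\<close>
definition types :: "('f \<Rightarrow> nat) \<Rightarrow> ('r \<Rightarrow> nat) \<Rightarrow> ('a, 'f, 'r) struc \<Rightarrow> nat \<Rightarrow> 'a set
     \<Rightarrow> (('a list \<Rightarrow> real) \<Rightarrow> real) set" where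
  "types af ar M n A =
     {p. let F = fmfuns af ar M n A in
          (\<forall>f. f \<notin> F \<longrightarrow> p f = 0)
        \<and> (\<forall>f\<in>F. \<forall>g\<in>F. p (\<lambda>xs. f xs + g xs) = p f + p g)
        \<and> (\<forall>f\<in>F. \<forall>c. p (\<lambda>xs. c * f xs) = c * p f)
        \<and> p (\<lambda>xs. 1) = 1
        \<and> (\<forall>f\<in>F. (\<forall>xs\<in>tuples (sc_carrier M) n. 0 \<le> f xs) \<longrightarrow> 0 \<le> p f)}"

definition extreme_in :: "('b \<Rightarrow> real) \<Rightarrow> ('b \<Rightarrow> real) set \<Rightarrow> bool" where
  "extreme_in p K \<longleftrightarrow> p \<in> K \<and>
     (\<forall>q1\<in>K. \<forall>q2\<in>K. \<forall>t::real. 0 < t \<and> t < 1 \<and> p = (\<lambda>f. t * q1 f + (1 - t) * q2 f)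
        \<longrightarrow> q1 = q2)"

definition realizes :: "('f \<Rightarrow> nat) \<Rightarrow> ('r \<Rightarrow> nat) \<Rightarrow> ('a, 'f, 'r) struc \<Rightarrow> nat \<Rightarrow> 'a set
     \<Rightarrow> 'a list \<Rightarrow> (('a list \<Rightarrow> real) \<Rightarrow> real) \<Rightarrow> bool" where
  "realizes af ar M n A xs p \<longleftrightarrow> (\<forall>f\<in>fmfuns af ar M n A. p f = f xs)"

definition ext_sat :: "('f \<Rightarrow> nat) \<Rightarrow> ('r \<Rightarrow> nat) \<Rightarrow> ('a, 'f, 'r) struc \<Rightarrow> bool" where
  "ext_sat af ar M \<longleftrightarrow>
     (\<forall>A n p. finite A \<and> A \<subseteq> sc_carrier M \<and> extreme_in p (types af ar M n A)
        \<longrightarrow> (\<exists>xs\<in>tuples (sc_carrier M) n. realizes af ar M n A xs p))"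

definition def_pred :: "('f \<Rightarrow> nat) \<Rightarrow> ('r \<Rightarrow> nat) \<Rightarrow> ('a, 'f, 'r) struc \<Rightarrow> nat
     \<Rightarrow> ('a list \<Rightarrow> real) \<Rightarrow> bool" where
  "def_pred af ar S n P \<longleftrightarrow>
     (\<exists>\<phi> :: nat \<Rightarrow> ('f, 'r) afm. (\<forall>k. wf_fm af ar (\<phi> k) \<and> fv (\<phi> k) \<subseteq> {..<n}) \<and>
        (\<forall>e>0. \<exists>K. \<forall>k\<ge>K. \<forall>xs\<in>tuples (sc_carrier S) n.
            \<bar>eval S (\<phi> k) (\<lambda>i. xs ! i) - P xs\<bar> \<le> e))"

text \<open>Distance to a set of n-tuples, with the convention that the infimum over the
  empty set is the sup-norm of the predicate (x,y) \<mapsto> d(x,y) on S^n \<times> S^n.\<close>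
definition tsetdist :: "('a, 'f, 'r, 'z) struc_scheme \<Rightarrow> nat \<Rightarrow> 'a list set \<Rightarrow> 'a list \<Rightarrow> real" where
  "tsetdist S n X xs =
     (if X = {} then (SUP p\<in>tuples (sc_carrier S) n \<times> tuples (sc_carrier S) n. tdist S (fst p) (snd p))
      else (INF ys\<in>X. tdist S xs ys))"

definition closed_tuples :: "('a, 'f, 'r, 'z) struc_scheme \<Rightarrow> nat \<Rightarrow> 'a list set \<Rightarrow> bool" where
  "closed_tuples S n X \<longleftrightarrow> X \<subseteq> tuples (sc_carrier S) n \<and>
     (\<forall>xs\<in>tuples (sc_carrier S) n. (\<forall>e>0. \<exists>ys\<in>X. tdist S xs ys < e) \<longrightarrow> xs \<in> X)"

definition def_set :: "('f \<Rightarrow> nat) \<Rightarrow> ('r \<Rightarrow> nat) \<Rightarrow> ('a, 'f, 'r) struc \<Rightarrow> nat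
     \<Rightarrow> 'a list set \<Rightarrow> bool" where
  "def_set af ar S n X \<longleftrightarrow> closed_tuples S n X \<and> def_pred af ar S n (tsetdist S n X)"

text \<open>The expanded language has relation symbols 'r option; None is the new
  n-ary predicate symbol.\<close>
definition exp_ar :: "('r \<Rightarrow> nat) \<Rightarrow> nat \<Rightarrow> 'r option \<Rightarrow> nat" where
  "exp_ar ar n r = (case r of None \<Rightarrow> n | Some r' \<Rightarrow> ar r')"

definition expand :: "('a, 'f, 'r) struc \<Rightarrow> ('a list \<Rightarrow> real) \<Rightarrow> ('a, 'f, 'r option) struc" where
  "expand S P = \<lparr>sc_carrier = sc_carrier S, sc_d = sc_d S, sc_fn = sc_fn S,
      sc_rel = (\<lambda>r. case r of None \<Rightarrow> P | Some r' \<Rightarrow> sc_rel S r')\<rparr>"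

end

theory Submission
  imports Defs
begin

text \<open>Since \<open>C \<subseteq> D\<close>, only \<open>d(x, C) \<le> d(x, D)\<close> for \<open>x \<in> M\<^sup>n\<close> needs work. The type over
  \<open>x\<close> of a tuple of \<open>N\<close>, evaluated in \<open>N\<close>, is a type over \<open>x\<close> in the sense of \<open>M\<close> because
  \<open>M \<preceq> N\<close>. The types making \<open>d(\<cdot>, D)\<close> vanish form a closed extreme subset of the compact
  type space; minimising \<open>d(x, \<cdot>)\<close> on it leaves a closed extreme subset, which contains an
  extreme type (Zorn), and extremal saturation realises that type by some \<open>y \<in> M\<^sup>n\<close>. As \<open>D\<close>
  is closed, \<open>y \<in> D\<close>, and \<open>d(x, y) \<le> d(x, z)\<close> for every \<open>z \<in> D\<close>.
  With the distance predicates agreeing on \<open>M\<^sup>n\<close>, formulas defining \<open>d(\<cdot>, D)\<close> in \<open>N\<close> define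
  \<open>d(\<cdot>, C)\<close> in \<open>M\<close>, and substituting them for the new predicate symbol approximates every
  formula of the expanded language uniformly in both structures at once.\<close>

lemma teval_cong: "\<forall>i\<in>fv_trm t. \<rho> i = \<rho>' i \<Longrightarrow> teval S \<rho> t = teval S \<rho>' t"
  by (induction t) (auto intro!: arg_cong[where f="sc_fn S _"] map_cong)

lemma eval_cong: "\<forall>i\<in>fv \<phi>. \<rho> i = \<rho>' i \<Longrightarrow> eval S \<phi> \<rho> = eval S \<phi> \<rho>'"
proof (induction \<phi> arbitrary: \<rho> \<rho>')
  case (Dst t u)
  then show ?case using teval_cong[of t \<rho> \<rho>' S] teval_cong[of u \<rho> \<rho>' S] by simp
next
  case (Rel r ts)
  then show ?case by (auto intro!: arg_cong[where f="sc_rel S r"] map_cong teval_cong)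
next
  case (InfQ x \<phi>)
  then have "eval S \<phi> (\<rho>(x := a)) = eval S \<phi> (\<rho>'(x := a))" for a by (intro InfQ.IH) auto
  then show ?case by simp
next
  case (SupQ x \<phi>)
  then have "eval S \<phi> (\<rho>(x := a)) = eval S \<phi> (\<rho>'(x := a))" for a by (intro SupQ.IH) auto
  then show ?case by simp
next
  case (Pls \<phi>1 \<phi>2)
  then show ?case by (metis UnCI eval.simps(5) fv.simps(5))
qed auto

lemma finite_fv_trm: "finite (fv_trm t)"
  by (induction t) auto

lemma finite_fv: "finite (fv \<phi>)"
  by (induction \<phi>) (auto simp: finite_fv_trm)

lemma less_Suc_Max_insert_0: "finite S \<Longrightarrow> i \<in> S \<Longrightarrow> i < Suc (Max (insert 0 S))"
  by (simp add: le_imp_less_Suc)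

fun rename_trm :: "(nat \<Rightarrow> nat) \<Rightarrow> 'f trm \<Rightarrow> 'f trm" where
  "rename_trm \<sigma> (Var i) = Var (\<sigma> i)"
| "rename_trm \<sigma> (Fn f ts) = Fn f (map (rename_trm \<sigma>) ts)"

fun rename :: "(nat \<Rightarrow> nat) \<Rightarrow> ('f, 'r) afm \<Rightarrow> ('f, 'r) afm" where
  "rename \<sigma> One = One"
| "rename \<sigma> (Dst t u) = Dst (rename_trm \<sigma> t) (rename_trm \<sigma> u)"
| "rename \<sigma> (Rel r ts) = Rel r (map (rename_trm \<sigma>) ts)"
| "rename \<sigma> (Scl c \<phi>) = Scl c (rename \<sigma> \<phi>)"
| "rename \<sigma> (Pls \<phi> \<psi>) = Pls (rename \<sigma> \<phi>) (rename \<sigma> \<psi>)"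
| "rename \<sigma> (InfQ x \<phi>) = InfQ (\<sigma> x) (rename \<sigma> \<phi>)"
| "rename \<sigma> (SupQ x \<phi>) = SupQ (\<sigma> x) (rename \<sigma> \<phi>)"

lemma teval_rename_trm: "teval S \<rho> (rename_trm \<sigma> t) = teval S (\<rho> \<circ> \<sigma>) t"
  by (induction t) (auto intro!: arg_cong[where f="sc_fn S _"])

lemma wf_trm_rename_trm [simp]: "wf_trm af (rename_trm \<sigma> t) = wf_trm af t"
  by (induction t) auto

lemma fv_trm_rename_trm: "fv_trm (rename_trm \<sigma> t) = \<sigma> ` fv_trm t"
  by (induction t) auto

lemma wf_fm_rename [simp]: "wf_fm af ar (rename \<sigma> \<phi>) = wf_fm af ar \<phi>"
  by (induction \<phi>) auto

lemma fv_rename: "inj \<sigma> \<Longrightarrow> fv (rename \<sigma> \<phi>) = \<sigma> ` fv \<phi>"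
  by (induction \<phi>) (auto simp: fv_trm_rename_trm image_set_diff)

lemma eval_rename: "inj \<sigma> \<Longrightarrow> eval S (rename \<sigma> \<phi>) \<rho> = eval S \<phi> (\<rho> \<circ> \<sigma>)"
proof (induction \<phi> arbitrary: \<rho>)
  case (InfQ x \<phi>)
  have "(\<rho>(\<sigma> x := a)) \<circ> \<sigma> = (\<rho> \<circ> \<sigma>)(x := a)" for a
    using InfQ.prems by (auto simp: fun_eq_iff inj_eq)
  then show ?case using InfQ by (simp only: rename.simps eval.simps)
next
  case (SupQ x \<phi>)
  have "(\<rho>(\<sigma> x := a)) \<circ> \<sigma> = (\<rho> \<circ> \<sigma>)(x := a)" for a
    using SupQ.prems by (auto simp: fun_eq_iff inj_eq)
  then show ?case using SupQ by (simp only: rename.simps eval.simps)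
qed (auto simp: teval_rename_trm comp_def)

fun bv :: "('f, 'r) afm \<Rightarrow> nat set" where
  "bv One = {}"
| "bv (Dst t u) = {}"
| "bv (Rel r ts) = {}"
| "bv (Scl c \<phi>) = bv \<phi>"
| "bv (Pls \<phi> \<psi>) = bv \<phi> \<union> bv \<psi>"
| "bv (InfQ x \<phi>) = insert x (bv \<phi>)"
| "bv (SupQ x \<phi>) = insert x (bv \<phi>)"

lemma bv_rename: "bv (rename \<sigma> \<phi>) = \<sigma> ` bv \<phi>"
  by (induction \<phi>) auto

fun subst_trm :: "(nat \<Rightarrow> 'f trm) \<Rightarrow> 'f trm \<Rightarrow> 'f trm" where
  "subst_trm s (Var i) = s i"
| "subst_trm s (Fn f ts) = Fn f (map (subst_trm s) ts)"

fun subst :: "(nat \<Rightarrow> 'f trm) \<Rightarrow> ('f, 'r) afm \<Rightarrow> ('f, 'r) afm" where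
  "subst s One = One"
| "subst s (Dst t u) = Dst (subst_trm s t) (subst_trm s u)"
| "subst s (Rel r ts) = Rel r (map (subst_trm s) ts)"
| "subst s (Scl c \<phi>) = Scl c (subst s \<phi>)"
| "subst s (Pls \<phi> \<psi>) = Pls (subst s \<phi>) (subst s \<psi>)"
| "subst s (InfQ x \<phi>) = InfQ x (subst (s(x := Var x)) \<phi>)"
| "subst s (SupQ x \<phi>) = SupQ x (subst (s(x := Var x)) \<phi>)"

lemma teval_subst_trm: "teval S \<rho> (subst_trm s t) = teval S (\<lambda>j. teval S \<rho> (s j)) t"
  by (induction t) (auto intro!: arg_cong[where f="sc_fn S _"])

lemma wf_fm_subst:
  "(\<And>j. wf_trm af (s j)) \<Longrightarrow> wf_fm af ar (subst s \<phi>) = wf_fm af ar \<phi>"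
proof -
  have wf_trm_subst_trm: "(\<And>j. wf_trm af (s j)) \<Longrightarrow> wf_trm af (subst_trm s t) = wf_trm af t"
    for s and t :: "'a trm"
    by (induction t) auto
  show "(\<And>j. wf_trm af (s j)) \<Longrightarrow> wf_fm af ar (subst s \<phi>) = wf_fm af ar \<phi>"
    by (induction \<phi> arbitrary: s) (simp_all add: wf_trm_subst_trm)
qed

lemma teval_subst_update:
  assumes "\<And>j. j \<noteq> y \<Longrightarrow> y \<notin> fv_trm (s j)"
  shows "(\<lambda>j. teval S (\<rho>(y := a)) ((s(y := Var y)) j)) = (\<lambda>j. teval S \<rho> (s j))(y := a)"
  using assms by (auto simp: fun_eq_iff intro!: teval_cong)

lemma eval_subst:
  "(\<And>x j. x \<in> bv \<phi> \<Longrightarrow> j \<noteq> x \<Longrightarrow> x \<notin> fv_trm (s j)) \<Longrightarrow>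
   eval S (subst s \<phi>) \<rho> = eval S \<phi> (\<lambda>j. teval S \<rho> (s j))"
proof (induction \<phi> arbitrary: s \<rho>)
  case (InfQ y \<phi>)
  have "x \<notin> fv_trm ((s(y := Var y)) j)" if "x \<in> bv \<phi>" "j \<noteq> x" for x j
    using InfQ.prems that by auto
  moreover have "(\<lambda>j. teval S (\<rho>(y := a)) ((s(y := Var y)) j)) = (\<lambda>j. teval S \<rho> (s j))(y := a)" for a
    using InfQ.prems by (intro teval_subst_update) auto
  ultimately have "eval S (subst (s(y := Var y)) \<phi>) (\<rho>(y := a)) = eval S \<phi> ((\<lambda>j. teval S \<rho> (s j))(y := a))" for a
    using InfQ.IH by metis
  then show ?case by (simp only: subst.simps eval.simps)
next
  case (SupQ y \<phi>)
  have "x \<notin> fv_trm ((s(y := Var y)) j)" if "x \<in> bv \<phi>" "j \<noteq> x" for x j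
    using SupQ.prems that by auto
  moreover have "(\<lambda>j. teval S (\<rho>(y := a)) ((s(y := Var y)) j)) = (\<lambda>j. teval S \<rho> (s j))(y := a)" for a
    using SupQ.prems by (intro teval_subst_update) auto
  ultimately have "eval S (subst (s(y := Var y)) \<phi>) (\<rho>(y := a)) = eval S \<phi> ((\<lambda>j. teval S \<rho> (s j))(y := a))" for a
    using SupQ.IH by metis
  then show ?case by (simp only: subst.simps eval.simps)
qed (auto simp: teval_subst_trm intro!: arg_cong[where f="sc_rel S _"])

text \<open>Shifting all variables of \<open>\<phi>\<close> beyond those of \<open>ts\<close> first ensures that the
  substitution captures nothing.\<close>
definition inst :: "'f trm list \<Rightarrow> ('f, 'r) afm \<Rightarrow> ('f, 'r) afm" where
  "inst ts \<phi> = (let B = Suc (Max (insert 0 (\<Union>t\<in>set ts. fv_trm t))) in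
     subst (\<lambda>j. if B \<le> j \<and> j < B + length ts then ts ! (j - B) else Var j) (rename (\<lambda>i. i + B) \<phi>))"

lemma wf_fm_inst: "\<forall>t\<in>set ts. wf_trm af t \<Longrightarrow> wf_fm af ar (inst ts \<phi>) = wf_fm af ar \<phi>"
  unfolding inst_def Let_def by (subst wf_fm_subst) auto

lemma eval_inst:
  assumes "fv \<phi> \<subseteq> {..<length ts}"
  shows "eval S (inst ts \<phi>) \<rho> = eval S \<phi> (\<lambda>i. teval S \<rho> (ts ! i))"
proof -
  define B where "B = Suc (Max (insert 0 (\<Union>t\<in>set ts. fv_trm t)))"
  define s where "s = (\<lambda>j. if B \<le> j \<and> j < B + length ts then ts ! (j - B) else Var j)"
  have shift: "inj (\<lambda>i::nat. i + B)" by (simp add: inj_def)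
  have below_B: "v < B" if "t \<in> set ts" "v \<in> fv_trm t" for t v
    unfolding B_def using that by (intro less_Suc_Max_insert_0) (auto simp: finite_fv_trm)
  have "x \<notin> fv_trm (s j)" if "x \<in> bv (rename (\<lambda>i. i + B) \<phi>)" "j \<noteq> x" for x j
    using that below_B[of "ts ! (j - B)" x] by (auto simp: s_def bv_rename)
  then have "eval S (inst ts \<phi>) \<rho> = eval S (rename (\<lambda>i. i + B) \<phi>) (\<lambda>j. teval S \<rho> (s j))"
    unfolding inst_def Let_def B_def[symmetric] s_def[symmetric] by (rule eval_subst)
  also have "\<dots> = eval S \<phi> (\<lambda>i. teval S \<rho> (ts ! i))"
    using assms by (auto simp: eval_rename[OF shift] s_def intro!: eval_cong)
  finally show ?thesis .
qed

lemma struc_carrier_nonempty: "is_struc af ar S \<Longrightarrow> sc_carrier S \<noteq> {}"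
  by (simp add: is_struc_def Let_def)

lemma struc_dist:
  "is_struc af ar S \<Longrightarrow> x \<in> sc_carrier S \<Longrightarrow> y \<in> sc_carrier S \<Longrightarrow>
   0 \<le> sc_d S x y \<and> sc_d S x y \<le> 1 \<and> (sc_d S x y = 0 \<longleftrightarrow> x = y)"
  by (simp add: is_struc_def Let_def)

lemma struc_rel_bounds:
  "is_struc af ar S \<Longrightarrow> xs \<in> tuples (sc_carrier S) (ar r) \<Longrightarrow> 0 \<le> sc_rel S r xs \<and> sc_rel S r xs \<le> 1"
  by (simp add: is_struc_def Let_def)

lemma teval_in_carrier:
  assumes "is_struc af ar S" and "range \<rho> \<subseteq> sc_carrier S"
  shows "wf_trm af t \<Longrightarrow> teval S \<rho> t \<in> sc_carrier S"
proof (induction t)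
  case (Fn f ts)
  then have "map (teval S \<rho>) ts \<in> tuples (sc_carrier S) (af f)" by (auto simp: tuples_def)
  then show ?case using assms(1) by (simp add: is_struc_def Let_def)
qed (use assms(2) in auto)

lemma map_teval_in_tuples:
  "is_struc af ar S \<Longrightarrow> \<forall>t\<in>set ts. wf_trm af t \<Longrightarrow> range \<rho> \<subseteq> sc_carrier S \<Longrightarrow>
   map (teval S \<rho>) ts \<in> tuples (sc_carrier S) (length ts)"
  by (auto simp: tuples_def intro: teval_in_carrier)

lemma range_fun_upd_subset: "range \<rho> \<subseteq> C \<Longrightarrow> a \<in> C \<Longrightarrow> range (\<rho>(x := a)) \<subseteq> C"
  by auto

lemma tuples_nth: "xs \<in> tuples C k \<Longrightarrow> i < k \<Longrightarrow> xs ! i \<in> C"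
  by (auto simp: tuples_def)

lemma tdist_nonneg:
  assumes "is_struc af ar S" "xs \<in> tuples (sc_carrier S) k" "ys \<in> tuples (sc_carrier S) k"
  shows "0 \<le> tdist S xs ys"
  unfolding tdist_def
proof (rule sum_nonneg)
  fix i assume "i \<in> {..<length xs}"
  then show "0 \<le> sc_d S (xs ! i) (ys ! i)"
    using assms struc_dist[OF assms(1) tuples_nth[OF assms(2)] tuples_nth[OF assms(3)]]
    by (simp add: tuples_def)
qed

lemma tdist_le_length:
  assumes "is_struc af ar S" "xs \<in> tuples (sc_carrier S) k" "ys \<in> tuples (sc_carrier S) k"
  shows "tdist S xs ys \<le> k"
proof -
  have "tdist S xs ys \<le> (\<Sum>i<length xs. 1)" unfolding tdist_def
  proof (rule sum_mono)
    fix i assume "i \<in> {..<length xs}"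
    then show "sc_d S (xs ! i) (ys ! i) \<le> 1"
      using assms struc_dist[OF assms(1) tuples_nth[OF assms(2)] tuples_nth[OF assms(3)]]
      by (simp add: tuples_def)
  qed
  then show ?thesis using assms by (simp add: tuples_def)
qed

lemma bdd_above_tdist_pairs:
  "is_struc af ar S \<Longrightarrow>
   bdd_above ((\<lambda>p. tdist S (fst p) (snd p)) ` (tuples (sc_carrier S) n \<times> tuples (sc_carrier S) n))"
  by (intro bdd_aboveI[where M="real n"]) (auto intro: tdist_le_length)

lemma tdist_self: assumes "is_struc af ar S" "xs \<in> tuples (sc_carrier S) k"
  shows "tdist S xs xs = 0"
  unfolding tdist_def
proof (rule sum.neutral, rule ballI)
  fix i assume "i \<in> {..<length xs}"
  then show "sc_d S (xs ! i) (xs ! i) = 0"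
    using assms struc_dist[OF assms(1) tuples_nth[OF assms(2)] tuples_nth[OF assms(2)]]
    by (simp add: tuples_def)
qed

fun dist_sum_fm :: "nat \<Rightarrow> nat \<Rightarrow> ('f, 'r) afm" where
  "dist_sum_fm n 0 = Scl 0 One"
| "dist_sum_fm n (Suc m) = Pls (dist_sum_fm n m) (Dst (Var (n + m)) (Var m))"

lemma eval_dist_sum_fm: "eval S (dist_sum_fm n m) \<rho> = (\<Sum>i<m. sc_d S (\<rho> (n + i)) (\<rho> i))"
  by (induction m) auto

lemma wf_fm_dist_sum_fm [simp]: "wf_fm af ar (dist_sum_fm n m)"
  by (induction m) auto

lemma fv_dist_sum_fm: "fv (dist_sum_fm n m) \<subseteq> {..<n + m} \<inter> ({..<m} \<union> {n..})"
  by (induction m) auto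

lemma INF_approx:
  fixes f g :: "'a \<Rightarrow> real"
  assumes A: "A \<noteq> {}" and fg: "\<And>a. a \<in> A \<Longrightarrow> \<bar>f a - g a\<bar> \<le> e" and gb: "\<And>a. a \<in> A \<Longrightarrow> \<bar>g a\<bar> \<le> b"
  shows "\<bar>(INF a\<in>A. f a) - (INF a\<in>A. g a)\<bar> \<le> e"
proof -
  have bg: "bdd_below (g ` A)" using gb by (intro bdd_belowI[where m="-b"]) (force simp: abs_le_iff)
  have bf: "bdd_below (f ` A)" using gb fg by (intro bdd_belowI[where m="-b-e"]) (force simp: abs_le_iff)
  have "(INF a\<in>A. g a) - e \<le> (INF a\<in>A. f a)"
    using fg cINF_lower[OF bg] by (intro cINF_greatest[OF A]) (force simp: abs_le_iff)
  moreover have "(INF a\<in>A. f a) - e \<le> (INF a\<in>A. g a)"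
    using fg cINF_lower[OF bf] by (intro cINF_greatest[OF A]) (force simp: abs_le_iff)
  ultimately show ?thesis by (auto simp: abs_le_iff)
qed

lemma SUP_approx:
  fixes f g :: "'a \<Rightarrow> real"
  assumes A: "A \<noteq> {}" and fg: "\<And>a. a \<in> A \<Longrightarrow> \<bar>f a - g a\<bar> \<le> e" and gb: "\<And>a. a \<in> A \<Longrightarrow> \<bar>g a\<bar> \<le> b"
  shows "\<bar>(SUP a\<in>A. f a) - (SUP a\<in>A. g a)\<bar> \<le> e"
proof -
  have bg: "bdd_above (g ` A)" using gb by (intro bdd_aboveI[where M="b"]) (force simp: abs_le_iff)
  have bf: "bdd_above (f ` A)" using gb fg by (intro bdd_aboveI[where M="b+e"]) (force simp: abs_le_iff)
  have "(SUP a\<in>A. f a) \<le> (SUP a\<in>A. g a) + e"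
    using fg cSUP_upper[OF _ bg] by (intro cSUP_least[OF A]) (force simp: abs_le_iff)
  moreover have "(SUP a\<in>A. g a) \<le> (SUP a\<in>A. f a) + e"
    using fg cSUP_upper[OF _ bf] by (intro cSUP_least[OF A]) (force simp: abs_le_iff)
  ultimately show ?thesis by (auto simp: abs_le_iff)
qed

fun fm_bound :: "('f, 'r) afm \<Rightarrow> real" where
  "fm_bound (Scl c \<phi>) = \<bar>c\<bar> * fm_bound \<phi>"
| "fm_bound (Pls \<phi> \<psi>) = fm_bound \<phi> + fm_bound \<psi>"
| "fm_bound (InfQ x \<phi>) = fm_bound \<phi>"
| "fm_bound (SupQ x \<phi>) = fm_bound \<phi>"
| "fm_bound _ = 1"

lemma abs_eval_le_fm_bound:
  assumes S: "is_struc af ar S"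
  shows "wf_fm af ar \<phi> \<Longrightarrow> range \<rho> \<subseteq> sc_carrier S \<Longrightarrow> \<bar>eval S \<phi> \<rho>\<bar> \<le> fm_bound \<phi>"
proof (induction \<phi> arbitrary: \<rho>)
  case (Dst t u)
  then show ?case
    using struc_dist[OF S teval_in_carrier[OF S Dst(2)] teval_in_carrier[OF S Dst(2)], of t u] by auto
next
  case (Rel r ts)
  then have "map (teval S \<rho>) ts \<in> tuples (sc_carrier S) (ar r)"
    using map_teval_in_tuples[OF S, of ts \<rho>] by auto
  then show ?case using struc_rel_bounds[OF S] by auto
next
  case (Scl c \<phi>)
  then show ?case by (auto simp: abs_mult intro: mult_left_mono)
next
  case (Pls \<phi> \<psi>)
  then show ?case by (auto intro: order.trans[OF abs_triangle_ineq] add_mono)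
next
  case (InfQ x \<phi>)
  then have "\<bar>eval S \<phi> (\<rho>(x := a))\<bar> \<le> fm_bound \<phi>" if "a \<in> sc_carrier S" for a
    using that by (metis range_fun_upd_subset wf_fm.simps(6))
  then show ?case
    using INF_approx[OF struc_carrier_nonempty[OF S], where f="\<lambda>a. eval S \<phi> (\<rho>(x := a))"
        and g="\<lambda>_. 0" and e="fm_bound \<phi>" and b=0]
    by (simp add: range_fun_upd_subset struc_carrier_nonempty[OF S])
next
  case (SupQ x \<phi>)
  then have "\<bar>eval S \<phi> (\<rho>(x := a))\<bar> \<le> fm_bound \<phi>" if "a \<in> sc_carrier S" for a
    using that by (metis range_fun_upd_subset wf_fm.simps(7))
  then show ?case
    using SUP_approx[OF struc_carrier_nonempty[OF S], where f="\<lambda>a. eval S \<phi> (\<rho>(x := a))"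
        and g="\<lambda>_. 0" and e="fm_bound \<phi>" and b=0]
    by (simp add: range_fun_upd_subset struc_carrier_nonempty[OF S])
qed auto

section \<open>Extreme points of compact sets of functionals\<close>

definition extreme_subset :: "('b \<Rightarrow> real) set \<Rightarrow> ('b \<Rightarrow> real) set \<Rightarrow> bool" where
  "extreme_subset T K \<longleftrightarrow> K \<subseteq> T \<and>
     (\<forall>q1\<in>T. \<forall>q2\<in>T. \<forall>t::real. 0 < t \<and> t < 1 \<and> (\<lambda>f. t * q1 f + (1 - t) * q2 f) \<in> K
        \<longrightarrow> q1 \<in> K \<and> q2 \<in> K)"

lemma extreme_subset_Inter:
  "\<C> \<noteq> {} \<Longrightarrow> (\<And>K. K \<in> \<C> \<Longrightarrow> extreme_subset T K) \<Longrightarrow> extreme_subset T (\<Inter>\<C>)"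
  unfolding extreme_subset_def by blast

lemma convex_comb_le_min:
  fixes t a b m :: real
  assumes "0 < t" "t < 1" "t * a + (1 - t) * b \<le> m" "m \<le> a" "m \<le> b"
  shows "a \<le> m \<and> b \<le> m"
proof -
  have "0 \<le> t * (a - m)" "0 \<le> (1 - t) * (b - m)" using assms by simp_all
  moreover have "t * (a - m) + (1 - t) * (b - m) \<le> 0" using assms(3) by (simp add: algebra_simps)
  ultimately have "t * (a - m) \<le> 0" "(1 - t) * (b - m) \<le> 0" by linarith+
  then show ?thesis using assms(1,2) by (simp_all add: mult_le_0_iff)
qed

lemma convex_comb_vanishing_le:
  fixes s :: real and a b e :: "nat \<Rightarrow> real"
  assumes s: "0 < s" "s < 1"
    and comb: "\<forall>j. s * a j + (1 - s) * b j \<le> e j"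
    and lower: "\<forall>j. - e j \<le> b j"
    and cauchy: "\<forall>k j. a k \<le> a j + e k + e j"
    and e: "\<forall>d>0. \<exists>j. e j < d"
  shows "a k \<le> e k"
proof (rule ccontr)
  assume "\<not> a k \<le> e k"
  then have "0 < s * (a k - e k) / 2" using s by simp
  then obtain j where j: "e j < s * (a k - e k) / 2" using e by blast
  have "(1 - s) * (- e j) \<le> (1 - s) * b j" using s lower by (intro mult_left_mono) auto
  moreover have "s * a k \<le> s * (a j + e k + e j)" using s cauchy by (intro mult_left_mono) auto
  moreover have "s * a j + (1 - s) * b j \<le> e j" using comb by blast
  ultimately show False using j by (simp add: algebra_simps)
qed

lemma extreme_subset_vanishing:
  fixes h :: "nat \<Rightarrow> 'b" and e :: "nat \<Rightarrow> real"
  assumes lower: "\<forall>p\<in>T. \<forall>k. - e k \<le> p (h k)"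
    and cauchy: "\<forall>p\<in>T. \<forall>k j. p (h k) \<le> p (h j) + e k + e j"
    and e: "\<forall>d>0. \<exists>j. e j < d"
  shows "extreme_subset T {p\<in>T. \<forall>k. p (h k) \<le> e k}"
  unfolding extreme_subset_def
proof (intro conjI ballI allI impI)
  fix q1 q2 and t :: real
  assume q: "q1 \<in> T" "q2 \<in> T" and t: "0 < t \<and> t < 1 \<and> (\<lambda>f. t * q1 f + (1 - t) * q2 f) \<in> {p\<in>T. \<forall>k. p (h k) \<le> e k}"
  then have comb: "\<forall>j. t * q1 (h j) + (1 - t) * q2 (h j) \<le> e j" by simp
  then have "q1 (h k) \<le> e k" for k
    using convex_comb_vanishing_le[of t "\<lambda>j. q1 (h j)" "\<lambda>j. q2 (h j)"] t q lower cauchy e by simp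
  moreover have "q2 (h k) \<le> e k" for k
    using convex_comb_vanishing_le[of "1 - t" "\<lambda>j. q2 (h j)" "\<lambda>j. q1 (h j)"] t q lower cauchy e comb
    by (simp add: add.commute)
  ultimately show "q1 \<in> {p\<in>T. \<forall>k. p (h k) \<le> e k}" "q2 \<in> {p\<in>T. \<forall>k. p (h k) \<le> e k}"
    using q by auto
qed auto

lemma extreme_subset_argmin:
  assumes T: "compact T" and K: "extreme_subset T K" "closed K" "K \<noteq> {}"
  obtains K' where "K' \<subseteq> K" "K' \<noteq> {}" "closed K'" "extreme_subset T K'" "\<forall>p\<in>K'. \<forall>q\<in>K. p g \<le> q g"
proof -
  have "compact K" using K(1,2) compact_Int_closed[OF T K(2)] by (auto simp: extreme_subset_def Int_absorb1)
  moreover have "continuous_on K (\<lambda>p. p g)"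
    using continuous_on_subset[of UNIV "\<lambda>p. p g" K] by simp
  ultimately obtain p0 where p0: "p0 \<in> K" "\<forall>q\<in>K. p0 g \<le> q g"
    using continuous_attains_inf[OF _ K(3)] by blast
  define K' where "K' = K \<inter> {p. p g \<le> p0 g}"
  have "closed K'" unfolding K'_def by (intro closed_Int K(2) closed_Collect_le) auto
  moreover have "K' \<subseteq> K" "K' \<noteq> {}" using p0 by (auto simp: K'_def)
  moreover have "extreme_subset T K'"
    unfolding extreme_subset_def
  proof (intro conjI ballI allI impI)
    show "K' \<subseteq> T" using K(1) by (auto simp: K'_def extreme_subset_def)
    fix q1 q2 t assume q: "q1 \<in> T" "q2 \<in> T" and h: "0 < t \<and> t < 1 \<and> (\<lambda>f. t * q1 f + (1 - t) * q2 f) \<in> K'"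
    then have "q1 \<in> K" "q2 \<in> K" using K(1) by (auto simp: extreme_subset_def K'_def)
    moreover have "t * q1 g + (1 - t) * q2 g \<le> p0 g" using h by (auto simp: K'_def)
    ultimately show "q1 \<in> K'" "q2 \<in> K'"
      using convex_comb_le_min[of t "q1 g" "q2 g" "p0 g"] h p0(2) by (auto simp: K'_def)
  qed
  moreover have "\<forall>p\<in>K'. \<forall>q\<in>K. p g \<le> q g" using p0 by (force simp: K'_def)
  ultimately show thesis by (intro that)
qed

lemma Inter_closed_chain_nonempty:
  assumes "compact K" "\<C> \<noteq> {}" "subset.chain \<A> \<C>"
    and "\<And>X. X \<in> \<C> \<Longrightarrow> X \<subseteq> K \<and> X \<noteq> {} \<and> closed X"
  shows "\<Inter>\<C> \<noteq> {}"
proof -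
  have "K \<inter> \<Inter>\<C> \<noteq> {}"
  proof (rule compact_imp_fip[OF assms(1)])
    show "closed X" if "X \<in> \<C>" for X using assms(4) that by blast
    fix \<F> assume "finite \<F>" "\<F> \<subseteq> \<C>"
    show "K \<inter> \<Inter>\<F> \<noteq> {}"
    proof (cases "\<F> = {}")
      case False
      have "subset.chain \<A> \<F>" using assms(3) \<open>\<F> \<subseteq> \<C>\<close> unfolding subset.chain_def by blast
      then have "\<Inter>\<F> \<in> \<C>" using \<open>finite \<F>\<close> False \<open>\<F> \<subseteq> \<C>\<close> Inter_in_chain by blast
      then show ?thesis using assms(4) by (simp add: Int_absorb1)
    next
      case True
      obtain X where "X \<in> \<C>" using assms(2) by blast
      then show ?thesis using assms(4)[of X] True by auto
    qed
  qed
  then show ?thesis by blast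
qed

lemma extreme_in_if_singleton:
  assumes ext: "extreme_subset T {p}"
  shows "extreme_in p T"
  unfolding extreme_in_def
proof (intro conjI ballI allI impI)
  show "p \<in> T" using ext by (simp add: extreme_subset_def)
  fix q1 q2 t assume q: "q1 \<in> T" "q2 \<in> T" and t: "0 < t \<and> t < 1 \<and> p = (\<lambda>f. t * q1 f + (1 - t) * q2 f)"
  then have "(\<lambda>f. t * q1 f + (1 - t) * q2 f) \<in> {p}" by simp
  then have "q1 \<in> {p} \<and> q2 \<in> {p}" using ext q t unfolding extreme_subset_def by blast
  then show "q1 = q2" by simp
qed

text \<open>Minimising a coordinate in which two of its points differ would give a smaller one.\<close>
lemma minimal_extreme_subset_singleton:
  assumes T: "compact T" and F: "extreme_subset T F" "closed F" "F \<noteq> {}"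
    and minimal: "\<And>X. X \<subseteq> F \<Longrightarrow> X \<noteq> {} \<Longrightarrow> closed X \<Longrightarrow> extreme_subset T X \<Longrightarrow> X = F"
  obtains p where "F = {p}"
proof -
  obtain p where p: "p \<in> F" using F(3) by blast
  have "F = {p}"
  proof (rule ccontr)
    assume "F \<noteq> {p}"
    then obtain q g where q: "q \<in> F" "q g \<noteq> p g" using p by (auto simp: fun_eq_iff)
    obtain F' where F': "F' \<subseteq> F" "F' \<noteq> {}" "closed F'" "extreme_subset T F'"
      and argmin: "\<forall>a\<in>F'. \<forall>b\<in>F. a g \<le> b g"
      by (rule extreme_subset_argmin[OF T F])
    from F' have "F' = F" by (rule minimal)
    then have "q g \<le> p g" "p g \<le> q g" using argmin p q(1) by auto
    then show False using q(2) by simp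
  qed
  then show thesis by (rule that)
qed

text \<open>Zorn's lemma yields a minimal closed nonempty extreme subset of \<open>K\<close>, which is a singleton.\<close>
lemma extreme_point_in_extreme_subset:
  assumes T: "compact T" and K: "extreme_subset T K" "closed K" "K \<noteq> {}"
  shows "\<exists>p\<in>K. extreme_in p T"
proof -
  define Fam where "Fam = {K'. K' \<subseteq> K \<and> K' \<noteq> {} \<and> closed K' \<and> extreme_subset T K'}"
  have "compact K" using K(1,2) compact_Int_closed[OF T K(2)] by (auto simp: extreme_subset_def Int_absorb1)
  have po: "partial_order_on Fam (relation_of (\<lambda>X Y. Y \<subseteq> X) Fam)"
    by (rule partial_order_on_relation_ofI) auto
  have chain_bound: "\<exists>U\<in>Fam. \<forall>X\<in>\<C>. U \<subseteq> X" if "\<C> \<in> Chains (relation_of (\<lambda>X Y. Y \<subseteq> X) Fam)" for \<C>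
  proof (cases "\<C> = {}")
    case True
    then show ?thesis using K by (auto simp: Fam_def)
  next
    case False
    have C: "\<C> \<subseteq> Fam" using Chains_relation_of[OF that] .
    have "subset.chain Fam \<C>"
      using that C by (auto simp: Chains_def relation_of_def subset.chain_def)
    then have "\<Inter>\<C> \<noteq> {}"
      using C False by (intro Inter_closed_chain_nonempty[OF \<open>compact K\<close>]) (auto simp: Fam_def)
    moreover have "\<Inter>\<C> \<subseteq> K" using C False by (auto simp: Fam_def)
    moreover have "closed (\<Inter>\<C>)" using C by (intro closed_Inter) (auto simp: Fam_def)
    moreover have "extreme_subset T (\<Inter>\<C>)" using C False by (intro extreme_subset_Inter) (auto simp: Fam_def)
    ultimately have "\<Inter>\<C> \<in> Fam" by (simp add: Fam_def)
    then show ?thesis by blast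
  qed
  obtain F where F: "F \<in> Fam" and minimal: "\<forall>X\<in>Fam. X \<subseteq> F \<longrightarrow> X = F"
    using predicate_Zorn[OF po chain_bound] by blast
  then have F_sub: "F \<subseteq> K" and F_ne: "F \<noteq> {}" and F_closed: "closed F"
    and F_ext: "extreme_subset T F"
    by (auto simp: Fam_def)
  have "X = F" if "X \<subseteq> F" "X \<noteq> {}" "closed X" "extreme_subset T X" for X
    using that minimal F_sub by (auto simp: Fam_def)
  then obtain p where "F = {p}" by (rule minimal_extreme_subset_singleton[OF T F_ext F_closed F_ne])
  then show ?thesis using extreme_in_if_singleton F_ext F_sub by blast
qed

locale elementary_pair =
  fixes af :: "'f \<Rightarrow> nat" and ar :: "'r \<Rightarrow> nat" and M N :: "('a, 'f, 'r) struc"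
  assumes M_struc: "is_struc af ar M" and N_struc: "is_struc af ar N"
    and M_elem_N: "elem_ext af ar M N"
begin

abbreviation "CM \<equiv> sc_carrier M"
abbreviation "CN \<equiv> sc_carrier N"

lemma carrier_subset: "CM \<subseteq> CN"
  using M_elem_N by (simp add: elem_ext_def)

lemma tuples_subset: "tuples CM k \<subseteq> tuples CN k"
  using carrier_subset by (auto simp: tuples_def)

lemma eval_M_eq_N: "wf_fm af ar \<phi> \<Longrightarrow> range \<rho> \<subseteq> CM \<Longrightarrow> eval M \<phi> \<rho> = eval N \<phi> \<rho>"
  using M_elem_N by (simp add: elem_ext_def)

definition base_point :: 'a where "base_point = (SOME a. a \<in> CM)"

lemma base_point_in_carrier: "base_point \<in> CM"
  unfolding base_point_def using struc_carrier_nonempty[OF M_struc] by (auto intro: someI)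

lemma eval_tuple_M_eq_N:
  assumes "wf_fm af ar \<phi>" "fv \<phi> \<subseteq> {..<n}" "xs \<in> tuples CM n"
  shows "eval M \<phi> (\<lambda>i. xs ! i) = eval N \<phi> (\<lambda>i. xs ! i)"
proof -
  define \<rho> where "\<rho> = (\<lambda>i. if i < n then xs ! i else base_point)"
  have "eval S \<phi> (\<lambda>i. xs ! i) = eval S \<phi> \<rho>" for S :: "('a, 'f, 'r) struc"
    using assms(2) by (intro eval_cong) (auto simp: \<rho>_def)
  moreover have "range \<rho> \<subseteq> CM"
    using assms(3) base_point_in_carrier by (auto simp: \<rho>_def tuples_def)
  ultimately show ?thesis using assms(1) eval_M_eq_N by simp
qed

lemma tdist_M_eq_N:
  assumes "xs \<in> tuples CM k" "ys \<in> tuples CM k"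
  shows "tdist N xs ys = tdist M xs ys"
proof -
  have "eval M (dist_sum_fm k k) (\<lambda>i. (ys @ xs) ! i) = eval N (dist_sum_fm k k) (\<lambda>i. (ys @ xs) ! i)"
    using assms fv_dist_sum_fm[of k k] by (intro eval_tuple_M_eq_N) (auto simp: tuples_def)
  then show ?thesis using assms by (simp add: tdist_def eval_dist_sum_fm tuples_def nth_append)
qed

text \<open>Nonnegativity of \<open>\<phi>\<close> for all values of the variables below \<open>m\<close> is nonnegativity of
  \<open>InfQ 0 (\<dots> (InfQ (m - 1) \<phi>))\<close>, which transfers to \<open>N\<close> by elementarity.\<close>
lemma nonneg_transfer:
  "wf_fm af ar \<phi> \<Longrightarrow> range \<rho> \<subseteq> CM \<Longrightarrow>
   (\<forall>\<rho>'. range \<rho>' \<subseteq> CM \<and> (\<forall>i\<ge>m. \<rho>' i = \<rho> i) \<longrightarrow> 0 \<le> eval M \<phi> \<rho>') \<Longrightarrow>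
   range \<rho>' \<subseteq> CN \<Longrightarrow> \<forall>i\<ge>m. \<rho>' i = \<rho> i \<Longrightarrow> 0 \<le> eval N \<phi> \<rho>'"
proof (induction m arbitrary: \<phi> \<rho>')
  case 0
  then have "\<rho>' = \<rho>" by auto
  then show ?case using 0 eval_M_eq_N[of \<phi> \<rho>] by auto
next
  case (Suc m)
  have wf: "wf_fm af ar (InfQ m \<phi>)" using Suc by simp
  have "0 \<le> eval M (InfQ m \<phi>) \<rho>''" if "range \<rho>'' \<subseteq> CM" "\<forall>i\<ge>m. \<rho>'' i = \<rho> i" for \<rho>''
  proof -
    have "0 \<le> eval M \<phi> (\<rho>''(m := b))" if "b \<in> CM" for b
    proof -
      have "range (\<rho>''(m := b)) \<subseteq> CM" using \<open>range \<rho>'' \<subseteq> CM\<close> that by (rule range_fun_upd_subset)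
      moreover have "\<forall>i\<ge>Suc m. (\<rho>''(m := b)) i = \<rho> i" using \<open>\<forall>i\<ge>m. \<rho>'' i = \<rho> i\<close> by auto
      ultimately show ?thesis using Suc.prems(3) by blast
    qed
    then show ?thesis using struc_carrier_nonempty[OF M_struc] by (simp add: cINF_greatest)
  qed
  moreover have "range (\<rho>'(m := \<rho> m)) \<subseteq> CN"
    using Suc.prems(2,4) carrier_subset by (intro range_fun_upd_subset) auto
  moreover have "\<forall>i\<ge>m. (\<rho>'(m := \<rho> m)) i = \<rho> i" using Suc.prems(5) by auto
  ultimately have "0 \<le> eval N (InfQ m \<phi>) (\<rho>'(m := \<rho> m))"
    using Suc.IH[OF wf Suc.prems(2)] by blast
  then have inf_nonneg: "0 \<le> (INF b\<in>CN. eval N \<phi> (\<rho>'(m := b)))" by simp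
  have "- fm_bound \<phi> \<le> eval N \<phi> (\<rho>'(m := b))" if "b \<in> CN" for b
    using abs_eval_le_fm_bound[OF N_struc Suc.prems(1) range_fun_upd_subset[OF Suc.prems(4) that, where x=m]]
    by (simp add: abs_le_iff)
  then have "bdd_below ((\<lambda>b. eval N \<phi> (\<rho>'(m := b))) ` CN)" by (rule bdd_belowI2)
  moreover have "\<rho>' m \<in> CN" using Suc.prems(4) by auto
  ultimately have "(INF b\<in>CN. eval N \<phi> (\<rho>'(m := b))) \<le> eval N \<phi> \<rho>'"
    using cINF_lower[of "\<lambda>b. eval N \<phi> (\<rho>'(m := b))" CN "\<rho>' m"] by simp
  then show ?case using inf_nonneg by linarith
qed

lemma upper_bound_transfer:
  assumes "wf_fm af ar \<phi>" "fv \<phi> \<subseteq> {..<m}" "\<And>\<rho>. range \<rho> \<subseteq> CM \<Longrightarrow> eval M \<phi> \<rho> \<le> c"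
    and "range \<rho> \<subseteq> CN"
  shows "eval N \<phi> \<rho> \<le> c"
proof -
  let ?\<theta> = "Pls (Scl c One) (Scl (-1) \<phi>)"
  let ?\<rho> = "\<lambda>i. if i < m then \<rho> i else base_point"
  have "eval N \<phi> \<rho> = eval N \<phi> ?\<rho>" using assms(2) by (intro eval_cong) auto
  moreover have "0 \<le> eval N ?\<theta> ?\<rho>"
  proof (rule nonneg_transfer[where \<rho>="\<lambda>_. base_point"])
    show "range ?\<rho> \<subseteq> CN" using assms(4) base_point_in_carrier carrier_subset by auto
    show "\<forall>\<rho>'. range \<rho>' \<subseteq> CM \<and> (\<forall>i\<ge>m. \<rho>' i = base_point) \<longrightarrow> 0 \<le> eval M ?\<theta> \<rho>'"
      using assms(3) by simp
  qed (use assms(1) base_point_in_carrier in auto)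
  ultimately show ?thesis by simp
qed

lemma tdist_N_le_tuple_diameter_M:
  assumes xs: "xs \<in> tuples CN n" and ys: "ys \<in> tuples CN n"
  shows "tdist N xs ys \<le> (SUP p\<in>tuples CM n \<times> tuples CM n. tdist M (fst p) (snd p))" (is "_ \<le> ?dM")
proof -
  have "eval M (dist_sum_fm n n) \<rho> \<le> ?dM" if "range \<rho> \<subseteq> CM" for \<rho>
  proof -
    have "eval M (dist_sum_fm n n) \<rho> = tdist M (map (\<lambda>i. \<rho> (n + i)) [0..<n]) (map \<rho> [0..<n])"
      by (simp add: eval_dist_sum_fm tdist_def)
    also have "\<dots> \<le> ?dM"
      using that by (intro cSUP_upper2[OF bdd_above_tdist_pairs[OF M_struc], of "(_, _)"])
        (auto simp: tuples_def intro: range_subsetD)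
    finally show ?thesis .
  qed
  then have bound_N: "eval N (dist_sum_fm n n) \<rho> \<le> ?dM" if "range \<rho> \<subseteq> CN" for \<rho>
    using that fv_dist_sum_fm[of n n] by (intro upper_bound_transfer[where m="n + n"]) auto
  define \<rho> where "\<rho> = (\<lambda>i. if i < n then ys ! i else if i < n + n then xs ! (i - n) else base_point)"
  have "range \<rho> \<subseteq> CN" using xs ys base_point_in_carrier carrier_subset by (auto simp: \<rho>_def tuples_def)
  moreover have "eval N (dist_sum_fm n n) \<rho> = tdist N xs ys"
    using xs by (simp add: eval_dist_sum_fm tdist_def tuples_def \<rho>_def)
  ultimately show ?thesis using bound_N[of \<rho>] by simp
qed

lemma tuple_diameter_M_eq_N:
  "(SUP p\<in>tuples CN n \<times> tuples CN n. tdist N (fst p) (snd p)) =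
   (SUP p\<in>tuples CM n \<times> tuples CM n. tdist M (fst p) (snd p))" (is "?dN = ?dM")
proof (rule antisym)
  have ne: "replicate n base_point \<in> tuples CM n" using base_point_in_carrier by (auto simp: tuples_def)
  show "?dN \<le> ?dM"
  proof (rule cSUP_least)
    show "tuples CN n \<times> tuples CN n \<noteq> {}" using ne tuples_subset by blast
    show "tdist N (fst p) (snd p) \<le> ?dM" if "p \<in> tuples CN n \<times> tuples CN n" for p
      using that tdist_N_le_tuple_diameter_M by (cases p) auto
  qed
  show "?dM \<le> ?dN"
  proof (rule cSUP_least)
    show "tuples CM n \<times> tuples CM n \<noteq> {}" using ne by blast
    fix p assume p: "p \<in> tuples CM n \<times> tuples CM n"
    then have "tdist M (fst p) (snd p) = tdist N (fst p) (snd p)" by (auto simp: tdist_M_eq_N)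
    also have "\<dots> \<le> ?dN"
      using p tuples_subset by (intro cSUP_upper[OF _ bdd_above_tdist_pairs[OF N_struc]]) auto
    finally show "tdist M (fst p) (snd p) \<le> ?dN" .
  qed
qed

lemma def_pred_restrict:
  assumes "def_pred af ar N n P" and "\<forall>xs\<in>tuples CM n. Q xs = P xs"
  shows "def_pred af ar M n Q"
proof -
  obtain \<phi> :: "nat \<Rightarrow> ('f, 'r) afm" where \<phi>: "\<forall>k. wf_fm af ar (\<phi> k) \<and> fv (\<phi> k) \<subseteq> {..<n}"
    and approx: "\<forall>e>0. \<exists>K. \<forall>k\<ge>K. \<forall>xs\<in>tuples CN n. \<bar>eval N (\<phi> k) (\<lambda>i. xs ! i) - P xs\<bar> \<le> e"
    using assms(1) unfolding def_pred_def by blast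
  have "\<forall>e>0. \<exists>K. \<forall>k\<ge>K. \<forall>xs\<in>tuples CM n. \<bar>eval M (\<phi> k) (\<lambda>i. xs ! i) - Q xs\<bar> \<le> e"
  proof (intro allI impI)
    fix e :: real assume "0 < e"
    then obtain K where K: "\<forall>k\<ge>K. \<forall>xs\<in>tuples CN n. \<bar>eval N (\<phi> k) (\<lambda>i. xs ! i) - P xs\<bar> \<le> e"
      using approx by blast
    have "\<bar>eval M (\<phi> k) (\<lambda>i. xs ! i) - Q xs\<bar> \<le> e" if "K \<le> k" "xs \<in> tuples CM n" for k xs
      using K that assms(2) \<phi> subsetD[OF tuples_subset that(2)] eval_tuple_M_eq_N[of "\<phi> k" n xs] by auto
    then show "\<exists>K. \<forall>k\<ge>K. \<forall>xs\<in>tuples CM n. \<bar>eval M (\<phi> k) (\<lambda>i. xs ! i) - Q xs\<bar> \<le> e" by blast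
  qed
  then show ?thesis using \<phi> unfolding def_pred_def by blast
qed

end

section \<open>Types over a set of parameters\<close>

locale type_space = elementary_pair af ar M N
  for af :: "'f \<Rightarrow> nat" and ar :: "'r \<Rightarrow> nat" and M N :: "('a, 'f, 'r) struc" +
  fixes n :: nat and A :: "'a set"
  assumes params_in_M: "A \<subseteq> sc_carrier M"
begin

definition env :: "'a list \<Rightarrow> (nat \<Rightarrow> 'a) \<Rightarrow> nat \<Rightarrow> 'a" where
  "env xs \<rho> = (\<lambda>i. if i < n then xs ! i else \<rho> i)"

lemma range_env_subset: "xs \<in> tuples C n \<Longrightarrow> range \<rho> \<subseteq> C \<Longrightarrow> range (env xs \<rho>) \<subseteq> C"
  by (auto simp: env_def tuples_def)

definition represents :: "('f, 'r) afm \<Rightarrow> (nat \<Rightarrow> 'a) \<Rightarrow> ('a list \<Rightarrow> real) \<Rightarrow> bool" where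
  "represents \<phi> \<rho> f \<longleftrightarrow> wf_fm af ar \<phi> \<and> range \<rho> \<subseteq> CM \<and> (\<forall>i\<in>fv \<phi>. n \<le> i \<longrightarrow> \<rho> i \<in> A) \<and>
     f = (\<lambda>xs. eval M \<phi> (env xs \<rho>))"

lemma fmfuns_iff_represents: "f \<in> fmfuns af ar M n A \<longleftrightarrow> (\<exists>\<phi> \<rho>. represents \<phi> \<rho> f)"
proof
  assume "f \<in> fmfuns af ar M n A"
  then obtain \<phi> \<rho> where \<phi>: "wf_fm af ar \<phi>" "\<forall>i\<in>fv \<phi>. n \<le> i \<longrightarrow> \<rho> i \<in> A"
    and f: "f = (\<lambda>xs. eval M \<phi> (env xs \<rho>))"
    unfolding fmfuns_def env_def by blast
  define \<rho>' where "\<rho>' = (\<lambda>i. if i \<in> fv \<phi> \<and> n \<le> i then \<rho> i else base_point)"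
  have "eval M \<phi> (env xs \<rho>) = eval M \<phi> (env xs \<rho>')" for xs
    by (intro eval_cong) (auto simp: env_def \<rho>'_def)
  then have "represents \<phi> \<rho>' f"
    using \<phi> f params_in_M base_point_in_carrier by (auto simp: represents_def \<rho>'_def)
  then show "\<exists>\<phi> \<rho>. represents \<phi> \<rho> f" by blast
next
  assume "\<exists>\<phi> \<rho>. represents \<phi> \<rho> f"
  then show "f \<in> fmfuns af ar M n A" unfolding fmfuns_def represents_def env_def by blast
qed

text \<open>The parameter variables of \<open>\<psi>\<close> are shifted beyond the variables of \<open>\<phi>\<close>.\<close>
lemma represents_common_params:
  assumes f: "represents \<phi> \<rho>\<^sub>1 f" and g: "represents \<psi> \<rho>\<^sub>2 g"
  shows "\<exists>\<rho> \<psi>'. represents \<phi> \<rho> f \<and> represents \<psi>' \<rho> g \<and>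
    (\<forall>xs. eval N \<phi> (env xs \<rho>) = eval N \<phi> (env xs \<rho>\<^sub>1)) \<and>
    (\<forall>xs. eval N \<psi>' (env xs \<rho>) = eval N \<psi> (env xs \<rho>\<^sub>2))"
proof -
  define B where "B = Suc (Max (insert 0 (fv \<phi>)))"
  have fv_below: "i < B" if "i \<in> fv \<phi>" for i
    unfolding B_def using that by (intro less_Suc_Max_insert_0 finite_fv)
  define \<sigma> where "\<sigma> = (\<lambda>i. if i < n then i else i + B)"
  define \<rho> where "\<rho> = (\<lambda>j. if j < B then \<rho>\<^sub>1 j else \<rho>\<^sub>2 (j - B))"
  have inj: "inj \<sigma>" by (auto simp: inj_def \<sigma>_def split: if_splits)
  have shifted: "env xs \<rho> \<circ> \<sigma> = env xs \<rho>\<^sub>2" for xs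
    by (auto simp: fun_eq_iff env_def \<sigma>_def \<rho>_def)
  have eval_\<phi>: "eval S \<phi> (env xs \<rho>) = eval S \<phi> (env xs \<rho>\<^sub>1)" for S :: "('a, 'f, 'r) struc" and xs
    using fv_below by (intro eval_cong) (auto simp: env_def \<rho>_def)
  have eval_\<psi>: "eval S (rename \<sigma> \<psi>) (env xs \<rho>) = eval S \<psi> (env xs \<rho>\<^sub>2)" for S :: "('a, 'f, 'r) struc" and xs
    by (simp add: eval_rename[OF inj] shifted)
  have range: "range \<rho> \<subseteq> CM" using f g by (auto simp: represents_def \<rho>_def)
  have "\<forall>i\<in>fv \<phi>. n \<le> i \<longrightarrow> \<rho> i \<in> A" using f fv_below by (auto simp: represents_def \<rho>_def)
  then have "represents \<phi> \<rho> f" using f range by (auto simp: represents_def eval_\<phi>)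
  moreover have "represents (rename \<sigma> \<psi>) \<rho> g"
    unfolding represents_def
  proof (intro conjI ballI impI range)
    show "wf_fm af ar (rename \<sigma> \<psi>)" using g by (simp add: represents_def)
    show "g = (\<lambda>xs. eval M (rename \<sigma> \<psi>) (env xs \<rho>))" using g by (simp add: represents_def eval_\<psi>)
    fix i assume "i \<in> fv (rename \<sigma> \<psi>)" "n \<le> i"
    then obtain k where k: "k \<in> fv \<psi>" "i = \<sigma> k" by (auto simp: fv_rename[OF inj])
    then have "n \<le> k" and i: "i = k + B" using \<open>n \<le> i\<close> by (auto simp: \<sigma>_def split: if_splits)
    then show "\<rho> i \<in> A" using g k(1) unfolding i by (simp add: represents_def \<rho>_def)
  qed
  ultimately show ?thesis using eval_\<phi> eval_\<psi> by blast
qed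

lemma represents_le_transfer:
  assumes f: "represents \<phi> \<rho>\<^sub>1 f" and g: "represents \<psi> \<rho>\<^sub>2 g"
    and le: "\<forall>xs\<in>tuples CM n. f xs \<le> g xs" and z: "z \<in> tuples CN n"
  shows "eval N \<phi> (env z \<rho>\<^sub>1) \<le> eval N \<psi> (env z \<rho>\<^sub>2)"
proof -
  obtain \<rho> \<psi>' where f': "represents \<phi> \<rho> f" and g': "represents \<psi>' \<rho> g"
    and eval_\<phi>: "\<forall>xs. eval N \<phi> (env xs \<rho>) = eval N \<phi> (env xs \<rho>\<^sub>1)"
    and eval_\<psi>: "\<forall>xs. eval N \<psi>' (env xs \<rho>) = eval N \<psi> (env xs \<rho>\<^sub>2)"
    using represents_common_params[OF f g] by blast
  have wf: "wf_fm af ar \<phi>" "wf_fm af ar \<psi>'" and range: "range \<rho> \<subseteq> CM"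
    and f_eq: "f = (\<lambda>xs. eval M \<phi> (env xs \<rho>))" and g_eq: "g = (\<lambda>xs. eval M \<psi>' (env xs \<rho>))"
    using f' g' by (simp_all add: represents_def)
  let ?\<theta> = "Pls \<psi>' (Scl (-1) \<phi>)"
  have "\<forall>\<rho>'. range \<rho>' \<subseteq> CM \<and> (\<forall>i\<ge>n. \<rho>' i = \<rho> i) \<longrightarrow> 0 \<le> eval M ?\<theta> \<rho>'"
  proof (intro allI impI, elim conjE)
    fix \<rho>' assume "range \<rho>' \<subseteq> CM" "\<forall>i\<ge>n. \<rho>' i = \<rho> i"
    define xs where "xs = map \<rho>' [0..<n]"
    have "xs \<in> tuples CM n" using \<open>range \<rho>' \<subseteq> CM\<close> by (auto simp: xs_def tuples_def)
    moreover have "\<rho>' = env xs \<rho>" using \<open>\<forall>i\<ge>n. \<rho>' i = \<rho> i\<close> by (auto simp: fun_eq_iff env_def xs_def)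
    ultimately have "eval M ?\<theta> \<rho>' = g xs - f xs" and "f xs \<le> g xs"
      using le by (auto simp: f_eq g_eq)
    then show "0 \<le> eval M ?\<theta> \<rho>'" by simp
  qed
  moreover have "range (env z \<rho>) \<subseteq> CN"
    using z range carrier_subset by (intro range_env_subset) auto
  moreover have "\<forall>i\<ge>n. env z \<rho> i = \<rho> i" by (simp add: env_def)
  ultimately have "0 \<le> eval N ?\<theta> (env z \<rho>)"
    using nonneg_transfer[of ?\<theta> \<rho> n "env z \<rho>"] wf range by simp
  then show ?thesis by (simp add: eval_\<phi> eval_\<psi>)
qed

text \<open>The type of a tuple \<open>z\<close> of \<open>N\<close> over \<open>A\<close>, as a functional on the formula functions
  of \<open>M\<close>; it is well defined by the previous lemma.\<close>
definition realized_type :: "'a list \<Rightarrow> ('a list \<Rightarrow> real) \<Rightarrow> real" where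
  "realized_type z f = (if f \<in> fmfuns af ar M n A
     then case SOME (\<phi>, \<rho>). represents \<phi> \<rho> f of (\<phi>, \<rho>) \<Rightarrow> eval N \<phi> (env z \<rho>) else 0)"

lemma realized_type_eq:
  assumes f: "represents \<phi> \<rho> f" and z: "z \<in> tuples CN n"
  shows "realized_type z f = eval N \<phi> (env z \<rho>)"
proof -
  obtain \<phi>' \<rho>' where some: "(SOME (\<phi>, \<rho>). represents \<phi> \<rho> f) = (\<phi>', \<rho>')"
    by (rule prod.exhaust)
  have "case SOME (\<phi>, \<rho>). represents \<phi> \<rho> f of (\<phi>, \<rho>) \<Rightarrow> represents \<phi> \<rho> f"
    using f by (intro someI_ex[where P="\<lambda>(\<phi>, \<rho>). represents \<phi> \<rho> f"]) auto
  then have f': "represents \<phi>' \<rho>' f" unfolding some by simp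
  then have "f \<in> fmfuns af ar M n A" using fmfuns_iff_represents by blast
  then have "realized_type z f = eval N \<phi>' (env z \<rho>')" by (simp add: realized_type_def some)
  also have "\<dots> = eval N \<phi> (env z \<rho>)"
    using represents_le_transfer[OF f f' _ z] represents_le_transfer[OF f' f _ z] by simp
  finally show ?thesis .
qed

abbreviation "TS \<equiv> types af ar M n A"
abbreviation "FF \<equiv> fmfuns af ar M n A"

lemma types_add: "p \<in> TS \<Longrightarrow> f \<in> FF \<Longrightarrow> g \<in> FF \<Longrightarrow> p (\<lambda>xs. f xs + g xs) = p f + p g"
  and types_scale: "p \<in> TS \<Longrightarrow> f \<in> FF \<Longrightarrow> p (\<lambda>xs. c * f xs) = c * p f"
  and types_one: "p \<in> TS \<Longrightarrow> p (\<lambda>xs. 1) = 1"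
  and types_nonneg: "p \<in> TS \<Longrightarrow> f \<in> FF \<Longrightarrow> \<forall>xs\<in>tuples CM n. 0 \<le> f xs \<Longrightarrow> 0 \<le> p f"
  and types_outside: "p \<in> TS \<Longrightarrow> f \<notin> FF \<Longrightarrow> p f = 0"
  by (simp_all add: types_def Let_def)

lemma fmfuns_add: "f \<in> FF \<Longrightarrow> g \<in> FF \<Longrightarrow> (\<lambda>xs. f xs + g xs) \<in> FF"
proof -
  assume "f \<in> FF" "g \<in> FF"
  then obtain \<phi> \<rho>\<^sub>1 \<psi> \<rho>\<^sub>2 where "represents \<phi> \<rho>\<^sub>1 f" "represents \<psi> \<rho>\<^sub>2 g"
    by (auto simp: fmfuns_iff_represents)
  then obtain \<rho> \<psi>' where "represents \<phi> \<rho> f" "represents \<psi>' \<rho> g"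
    using represents_common_params by blast
  then have "represents (Pls \<phi> \<psi>') \<rho> (\<lambda>xs. f xs + g xs)" by (auto simp: represents_def)
  then show ?thesis by (auto simp: fmfuns_iff_represents)
qed

lemma fmfuns_scale: "f \<in> FF \<Longrightarrow> (\<lambda>xs. c * f xs) \<in> FF"
proof -
  assume "f \<in> FF"
  then obtain \<phi> \<rho> where "represents \<phi> \<rho> f" by (auto simp: fmfuns_iff_represents)
  then have "represents (Scl c \<phi>) \<rho> (\<lambda>xs. c * f xs)" by (auto simp: represents_def)
  then show ?thesis by (auto simp: fmfuns_iff_represents)
qed

lemma fmfuns_const: "(\<lambda>xs. c) \<in> FF"
proof -
  have "represents (Scl c One) (\<lambda>_. base_point) (\<lambda>xs. c)"
    using base_point_in_carrier by (auto simp: represents_def)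
  then show ?thesis by (auto simp: fmfuns_iff_represents)
qed

lemma types_const: "p \<in> TS \<Longrightarrow> p (\<lambda>xs. c) = c"
  using types_scale[OF _ fmfuns_const, of p c 1] types_one[of p] by simp

lemma types_mono:
  assumes p: "p \<in> TS" and f: "f \<in> FF" and g: "g \<in> FF" and le: "\<forall>xs\<in>tuples CM n. f xs \<le> g xs"
  shows "p f \<le> p g"
proof -
  have "(\<lambda>xs. g xs + -1 * f xs) \<in> FF" by (rule fmfuns_add[OF g fmfuns_scale[OF f]])
  then have "0 \<le> p (\<lambda>xs. g xs + -1 * f xs)" using le by (intro types_nonneg[OF p]) auto
  also have "p (\<lambda>xs. g xs + -1 * f xs) = p g + p (\<lambda>xs. -1 * f xs)"
    by (rule types_add[OF p g fmfuns_scale[OF f]])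
  also have "p (\<lambda>xs. -1 * f xs) = -1 * p f" by (rule types_scale[OF p f])
  finally show ?thesis by simp
qed

lemma types_abs_le:
  assumes "p \<in> TS" "f \<in> FF" "\<forall>xs\<in>tuples CM n. \<bar>f xs\<bar> \<le> c"
  shows "\<bar>p f\<bar> \<le> c"
proof -
  have "\<forall>xs\<in>tuples CM n. f xs \<le> c" "\<forall>xs\<in>tuples CM n. - c \<le> f xs"
    using assms(3) by (auto simp: abs_le_iff)
  then have "p f \<le> p (\<lambda>xs. c)" "p (\<lambda>xs. - c) \<le> p f"
    using types_mono[OF assms(1,2) fmfuns_const] types_mono[OF assms(1) fmfuns_const assms(2)] by auto
  then show ?thesis using types_const[OF assms(1)] by (simp add: abs_le_iff)
qed

lemma fmfuns_bounded: "f \<in> FF \<Longrightarrow> \<exists>c. \<forall>xs\<in>tuples CM n. \<bar>f xs\<bar> \<le> c"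
proof -
  assume "f \<in> FF"
  then obtain \<phi> \<rho> where f: "represents \<phi> \<rho> f" by (auto simp: fmfuns_iff_represents)
  have "\<bar>f xs\<bar> \<le> fm_bound \<phi>" if "xs \<in> tuples CM n" for xs
  proof -
    have "range (env xs \<rho>) \<subseteq> CM" using f that by (intro range_env_subset) (auto simp: represents_def)
    then show ?thesis using f by (auto simp: represents_def intro: abs_eval_le_fm_bound[OF M_struc])
  qed
  then show ?thesis by blast
qed

lemma types_closed: "closed TS"
proof -
  have closed_imp: "(P \<Longrightarrow> closed {x. Q x}) \<Longrightarrow> closed {x. P \<longrightarrow> Q x}"
    for P and Q :: "(('a list \<Rightarrow> real) \<Rightarrow> real) \<Rightarrow> bool"
    by (cases P) auto
  have "TS = {p. (\<forall>f. f \<notin> FF \<longrightarrow> p f = 0)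
     \<and> (\<forall>f. f \<in> FF \<longrightarrow> (\<forall>g. g \<in> FF \<longrightarrow> p (\<lambda>xs. f xs + g xs) = p f + p g))
     \<and> (\<forall>f. f \<in> FF \<longrightarrow> (\<forall>c. p (\<lambda>xs. c * f xs) = c * p f))
     \<and> p (\<lambda>xs. 1) = 1
     \<and> (\<forall>f. f \<in> FF \<longrightarrow> (\<forall>xs\<in>tuples CM n. 0 \<le> f xs) \<longrightarrow> 0 \<le> p f)}"
    by (auto simp: types_def Let_def)
  also have "closed \<dots>"
    by (intro closed_Collect_conj closed_Collect_all closed_imp closed_Collect_eq closed_Collect_le
        continuous_on_add continuous_on_mult_left continuous_on_const) simp_all
  finally show ?thesis .
qed

text \<open>Tychonoff: the type space is a closed subset of a product of compact intervals.\<close>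
lemma types_compact: "compact TS"
proof -
  obtain B where B: "\<forall>f\<in>FF. \<forall>xs\<in>tuples CM n. \<bar>f xs\<bar> \<le> B f"
    using fmfuns_bounded by metis
  have box: "compact (PiE UNIV (\<lambda>f. {-\<bar>B f\<bar>..\<bar>B f\<bar>}))"
    using compactin_PiE[of "\<lambda>_. euclidean" UNIV "\<lambda>f. {-\<bar>B f\<bar>..\<bar>B f\<bar>}"]
    by (simp add: euclidean_product_topology)
  have "p f \<in> {-\<bar>B f\<bar>..\<bar>B f\<bar>}" if "p \<in> TS" for p f
  proof (cases "f \<in> FF")
    case True
    then have "\<bar>p f\<bar> \<le> B f" using B that by (intro types_abs_le) auto
    then show ?thesis by auto
  next
    case False
    then show ?thesis using types_outside[OF that False] by simp
  qed
  then have "TS = PiE UNIV (\<lambda>f. {-\<bar>B f\<bar>..\<bar>B f\<bar>}) \<inter> TS" by (auto simp: PiE_iff)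
  then show ?thesis using compact_Int_closed[OF box types_closed] by simp
qed

lemma realized_type_in_types:
  assumes z: "z \<in> tuples CN n"
  shows "realized_type z \<in> TS"
  unfolding types_def Let_def mem_Collect_eq
proof (intro conjI allI ballI impI)
  fix f assume "f \<notin> FF"
  then show "realized_type z f = 0" by (simp add: realized_type_def)
next
  fix f g assume "f \<in> FF" "g \<in> FF"
  then obtain \<phi> \<rho>\<^sub>1 \<psi> \<rho>\<^sub>2 where "represents \<phi> \<rho>\<^sub>1 f" "represents \<psi> \<rho>\<^sub>2 g"
    by (auto simp: fmfuns_iff_represents)
  then obtain \<rho> \<psi>' where f: "represents \<phi> \<rho> f" and g: "represents \<psi>' \<rho> g"
    using represents_common_params by blast
  then have "represents (Pls \<phi> \<psi>') \<rho> (\<lambda>xs. f xs + g xs)" by (auto simp: represents_def)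
  then show "realized_type z (\<lambda>xs. f xs + g xs) = realized_type z f + realized_type z g"
    using realized_type_eq[OF _ z] f g by simp
next
  fix f c assume "f \<in> FF"
  then obtain \<phi> \<rho> where f: "represents \<phi> \<rho> f" by (auto simp: fmfuns_iff_represents)
  then have "represents (Scl c \<phi>) \<rho> (\<lambda>xs. c * f xs)" by (auto simp: represents_def)
  then show "realized_type z (\<lambda>xs. c * f xs) = c * realized_type z f"
    using realized_type_eq[OF _ z] f by simp
next
  have "represents One (\<lambda>_. base_point) (\<lambda>xs. 1)"
    using base_point_in_carrier by (auto simp: represents_def)
  then show "realized_type z (\<lambda>xs. 1) = 1" using realized_type_eq[OF _ z] by simp
next
  fix f assume "f \<in> FF" and nonneg: "\<forall>xs\<in>tuples CM n. 0 \<le> f xs"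
  then obtain \<phi> \<rho> where f: "represents \<phi> \<rho> f" by (auto simp: fmfuns_iff_represents)
  have zero: "represents (Scl 0 One) (\<lambda>_. base_point) (\<lambda>xs. 0)"
    using base_point_in_carrier by (auto simp: represents_def)
  show "0 \<le> realized_type z f"
    using represents_le_transfer[OF zero f _ z] nonneg realized_type_eq[OF f z] by simp
qed

end

section \<open>Distance to a definable set\<close>

lemma def_pred_uniform_seq:
  assumes "def_pred af ar S n P"
  obtains \<psi> :: "nat \<Rightarrow> ('f, 'r) afm" where "\<forall>k. wf_fm af ar (\<psi> k) \<and> fv (\<psi> k) \<subseteq> {..<n}"
    "\<forall>k. \<forall>xs\<in>tuples (sc_carrier S) n. \<bar>eval S (\<psi> k) (\<lambda>i. xs ! i) - P xs\<bar> \<le> inverse (real (Suc k))"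
proof -
  obtain \<phi> :: "nat \<Rightarrow> ('f, 'r) afm" where \<phi>: "\<forall>k. wf_fm af ar (\<phi> k) \<and> fv (\<phi> k) \<subseteq> {..<n}"
    and approx: "\<forall>e>0. \<exists>K. \<forall>k\<ge>K. \<forall>xs\<in>tuples (sc_carrier S) n. \<bar>eval S (\<phi> k) (\<lambda>i. xs ! i) - P xs\<bar> \<le> e"
    using assms unfolding def_pred_def by blast
  have "\<exists>K. \<forall>xs\<in>tuples (sc_carrier S) n. \<bar>eval S (\<phi> K) (\<lambda>i. xs ! i) - P xs\<bar> \<le> inverse (real (Suc k))" for k
    using approx[rule_format, of "inverse (real (Suc k))"] by auto
  then obtain K where "\<forall>k. \<forall>xs\<in>tuples (sc_carrier S) n. \<bar>eval S (\<phi> (K k)) (\<lambda>i. xs ! i) - P xs\<bar> \<le> inverse (real (Suc k))"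
    by metis
  then show thesis using \<phi> by (intro that[of "\<lambda>k. \<phi> (K k)"]) auto
qed

context
  fixes af :: "'f \<Rightarrow> nat" and ar :: "'r \<Rightarrow> nat"
    and S :: "('a, 'f, 'r) struc" and n :: nat and X :: "'a list set"
  assumes S: "is_struc af ar S" and X: "X \<subseteq> tuples (sc_carrier S) n"
begin

lemma bdd_below_tdist_image: "xs \<in> tuples (sc_carrier S) n \<Longrightarrow> bdd_below (tdist S xs ` X)"
  using X by (intro bdd_belowI[where m=0]) (auto intro: tdist_nonneg[OF S])

lemma tsetdist_nonneg: "X \<noteq> {} \<Longrightarrow> xs \<in> tuples (sc_carrier S) n \<Longrightarrow> 0 \<le> tsetdist S n X xs"
  unfolding tsetdist_def using X by (auto intro!: cINF_greatest tdist_nonneg[OF S])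

lemma tsetdist_le_tdist: "xs \<in> tuples (sc_carrier S) n \<Longrightarrow> ys \<in> X \<Longrightarrow> tsetdist S n X xs \<le> tdist S xs ys"
  unfolding tsetdist_def using cINF_lower[OF bdd_below_tdist_image] by auto

lemma tsetdist_eq_0: "ys \<in> X \<Longrightarrow> tsetdist S n X ys = 0"
  using X tsetdist_le_tdist[of ys ys] tdist_self[OF S] tsetdist_nonneg[of ys] by fastforce

lemma in_closed_of_tsetdist_le_0:
  assumes "closed_tuples S n X" "X \<noteq> {}" "xs \<in> tuples (sc_carrier S) n" "tsetdist S n X xs \<le> 0"
  shows "xs \<in> X"
proof -
  have "\<exists>ys\<in>X. tdist S xs ys < e" if "0 < e" for e
  proof -
    have "(INF ys\<in>X. tdist S xs ys) < e" using assms(2,4) that by (simp add: tsetdist_def)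
    then show ?thesis using cINF_less_iff[OF assms(2) bdd_below_tdist_image[OF assms(3)]] by blast
  qed
  then show ?thesis using assms(1,3) unfolding closed_tuples_def by blast
qed

end

locale definable_in_extension = elementary_pair af ar M N
  for af :: "'f \<Rightarrow> nat" and ar :: "'r \<Rightarrow> nat" and M N :: "('a, 'f, 'r) struc" +
  fixes n :: nat and D :: "'a list set"
  assumes M_ext_sat: "ext_sat af ar M" and D_definable: "def_set af ar N n D"
begin

abbreviation "dN \<equiv> tsetdist N n D"
abbreviation "C \<equiv> D \<inter> tuples CM n"
abbreviation "dM \<equiv> tsetdist M n C"

lemma D_subset: "D \<subseteq> tuples CN n"
  using D_definable by (simp add: def_set_def closed_tuples_def)

end

locale nearest_point = definable_in_extension af ar M N n D
  for af :: "'f \<Rightarrow> nat" and ar :: "'r \<Rightarrow> nat" and M N :: "('a, 'f, 'r) struc" and n D +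
  fixes x :: "'a list" and \<psi> :: "nat \<Rightarrow> ('f, 'r) afm"
  assumes x_in_M: "x \<in> tuples (sc_carrier M) n" and D_nonempty: "D \<noteq> {}"
    and \<psi>_wf: "\<forall>k. wf_fm af ar (\<psi> k) \<and> fv (\<psi> k) \<subseteq> {..<n}"
    and \<psi>_approx: "\<forall>k. \<forall>xs\<in>tuples (sc_carrier N) n.
      \<bar>eval N (\<psi> k) (\<lambda>i. xs ! i) - tsetdist N n D xs\<bar> \<le> inverse (real (Suc k))"

sublocale nearest_point \<subseteq> type_space af ar M N n "set x"
  using x_in_M by unfold_locales (auto simp: tuples_def)

context nearest_point
begin

abbreviation "err k \<equiv> inverse (real (Suc k))"

definition approx_fun :: "nat \<Rightarrow> 'a list \<Rightarrow> real" where
  "approx_fun k = (\<lambda>xs. eval M (\<psi> k) (\<lambda>i. xs ! i))"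

lemma fv_\<psi>: "i \<in> fv (\<psi> k) \<Longrightarrow> i < n"
  using \<psi>_wf by blast

lemma approx_fun_represents: "represents (\<psi> k) (\<lambda>_. base_point) (approx_fun k)"
proof -
  have "eval S (\<psi> k) (\<lambda>i. xs ! i) = eval S (\<psi> k) (env xs (\<lambda>_. base_point))" for S :: "('a, 'f, 'r) struc" and xs
    using fv_\<psi> by (intro eval_cong) (auto simp: env_def)
  then show ?thesis
    using \<psi>_wf base_point_in_carrier by (auto simp: represents_def approx_fun_def dest: fv_\<psi>)
qed

lemma approx_fun_in_fmfuns: "approx_fun k \<in> FF"
  using approx_fun_represents fmfuns_iff_represents by blast

lemma approx_fun_close: "xs \<in> tuples CM n \<Longrightarrow> \<bar>approx_fun k xs - dN xs\<bar> \<le> err k"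
proof -
  assume xs: "xs \<in> tuples CM n"
  then have "eval M (\<psi> k) (\<lambda>i. xs ! i) = eval N (\<psi> k) (\<lambda>i. xs ! i)"
    using \<psi>_wf by (intro eval_tuple_M_eq_N) auto
  then show ?thesis using \<psi>_approx subsetD[OF tuples_subset xs] by (simp add: approx_fun_def)
qed

lemma realized_type_approx_fun:
  "z \<in> tuples CN n \<Longrightarrow> realized_type z (approx_fun k) = eval N (\<psi> k) (\<lambda>i. z ! i)"
  using realized_type_eq[OF approx_fun_represents] fv_\<psi> by (auto simp: env_def intro!: eval_cong)

lemma dist_represents:
  "represents (dist_sum_fm n n) (\<lambda>j. if n \<le> j \<and> j < n + n then x ! (j - n) else base_point) (tdist M x)"
  using x_in_M fv_dist_sum_fm[of n n] base_point_in_carrier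
  by (auto simp: represents_def eval_dist_sum_fm env_def tdist_def tuples_def fun_eq_iff)

lemma realized_type_dist: "z \<in> tuples CN n \<Longrightarrow> realized_type z (tdist M x) = tdist N x z"
  using x_in_M by (simp add: realized_type_eq[OF dist_represents] eval_dist_sum_fm env_def tdist_def tuples_def)

text \<open>The types over \<open>set x\<close> which give the predicate \<open>d(\<cdot>, D)\<close> the value \<open>0\<close>.\<close>
definition types_of_D :: "(('a list \<Rightarrow> real) \<Rightarrow> real) set" where
  "types_of_D = {p \<in> TS. \<forall>k. p (approx_fun k) \<le> err k}"

lemma types_of_D_extreme: "extreme_subset TS types_of_D"
  unfolding types_of_D_def
proof (rule extreme_subset_vanishing)
  show "\<forall>p\<in>TS. \<forall>k. - err k \<le> p (approx_fun k)"
  proof (intro ballI allI)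
    fix p k assume p: "p \<in> TS"
    have "- err k \<le> approx_fun k xs" if "xs \<in> tuples CM n" for xs
    proof -
      have "0 \<le> dN xs"
        using tsetdist_nonneg[OF N_struc D_subset D_nonempty] subsetD[OF tuples_subset that] .
      then show ?thesis using approx_fun_close[OF that, of k] by (simp add: abs_le_iff)
    qed
    then have "p (\<lambda>xs. - err k) \<le> p (approx_fun k)"
      by (intro types_mono[OF p fmfuns_const approx_fun_in_fmfuns]) auto
    then show "- err k \<le> p (approx_fun k)" using types_const[OF p] by simp
  qed
  show "\<forall>p\<in>TS. \<forall>k j. p (approx_fun k) \<le> p (approx_fun j) + err k + err j"
  proof (intro ballI allI)
    fix p k j assume p: "p \<in> TS"
    have "\<forall>xs\<in>tuples CM n. approx_fun k xs \<le> approx_fun j xs + (err k + err j)"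
      using approx_fun_close[of _ k] approx_fun_close[of _ j] by (fastforce simp: abs_le_iff)
    then have "p (approx_fun k) \<le> p (\<lambda>xs. approx_fun j xs + (err k + err j))"
      by (intro types_mono[OF p approx_fun_in_fmfuns fmfuns_add[OF approx_fun_in_fmfuns fmfuns_const]])
    also have "\<dots> = p (approx_fun j) + (err k + err j)"
      using types_add[OF p approx_fun_in_fmfuns fmfuns_const] types_const[OF p] by simp
    finally show "p (approx_fun k) \<le> p (approx_fun j) + err k + err j" by simp
  qed
  show "\<forall>d>0. \<exists>j. err j < d" using reals_Archimedean by blast
qed

lemma types_of_D_closed: "closed types_of_D"
proof -
  have "types_of_D = TS \<inter> (\<Inter>k. {p. p (approx_fun k) \<le> err k})" by (auto simp: types_of_D_def)
  then show ?thesis by (simp add: closed_Int types_closed closed_INT closed_Collect_le)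
qed

lemma realized_type_in_types_of_D: "z \<in> D \<Longrightarrow> realized_type z \<in> types_of_D"
  using D_subset realized_type_in_types realized_type_approx_fun \<psi>_approx tsetdist_eq_0[OF N_struc D_subset]
  by (fastforce simp: types_of_D_def abs_le_iff)

lemma realizer_in_D:
  assumes p: "p \<in> types_of_D" and y: "y \<in> tuples CM n" and real: "realizes af ar M n (set x) y p"
  shows "y \<in> D"
proof -
  have small: "dN y \<le> 2 * err k" for k
  proof -
    have "approx_fun k y = p (approx_fun k)" using real approx_fun_in_fmfuns by (simp add: realizes_def)
    also have "\<dots> \<le> err k" using p by (simp add: types_of_D_def)
    finally show ?thesis using approx_fun_close[OF y, of k] by (simp add: abs_le_iff)
  qed
  have "dN y \<le> 0"
  proof (rule ccontr)
    assume "\<not> dN y \<le> 0"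
    then obtain k where "err k < dN y / 2" using reals_Archimedean by (metis half_gt_zero not_le)
    then show False using small[of k] by simp
  qed
  then show ?thesis using in_closed_of_tsetdist_le_0[OF N_struc D_subset] D_definable D_nonempty y tuples_subset
    by (auto simp: def_set_def)
qed


lemma nearest_point_exists: "\<exists>y\<in>D \<inter> tuples CM n. tdist M x y \<le> dN x"
proof -
  have "types_of_D \<noteq> {}" using realized_type_in_types_of_D D_nonempty by blast
  then obtain K where K: "K \<subseteq> types_of_D" "K \<noteq> {}" "closed K" "extreme_subset TS K"
    and argmin: "\<forall>p\<in>K. \<forall>q\<in>types_of_D. p (tdist M x) \<le> q (tdist M x)"
    by (rule extreme_subset_argmin[OF types_compact types_of_D_extreme types_of_D_closed])
  obtain p where p: "p \<in> K" "extreme_in p TS"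
    using extreme_point_in_extreme_subset[OF types_compact K(4,3,2)] by blast
  then obtain y where y: "y \<in> tuples CM n" and real: "realizes af ar M n (set x) y p"
    using M_ext_sat[unfolded ext_sat_def, rule_format, where A="set x" and n=n and p=p] params_in_M by blast
  have "y \<in> D" using K(1) p(1) y real by (intro realizer_in_D) auto
  have "tdist M x y \<le> tdist N x z" if "z \<in> D" for z
  proof -
    have "tdist M x \<in> FF" using dist_represents fmfuns_iff_represents by blast
    then have "tdist M x y = p (tdist M x)" using real by (simp add: realizes_def)
    also have "\<dots> \<le> realized_type z (tdist M x)"
      using argmin p(1) realized_type_in_types_of_D[OF that] by blast
    also have "\<dots> = tdist N x z" using realized_type_dist D_subset that by blast
    finally show ?thesis .
  qed
  then have "tdist M x y \<le> dN x" using D_nonempty by (simp add: tsetdist_def cINF_greatest)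
  then show ?thesis using \<open>y \<in> D\<close> y by blast
qed

end

context definable_in_extension
begin

lemma nearest_point_in_M:
  assumes "x \<in> tuples CM n" and "D \<noteq> {}"
  shows "\<exists>y\<in>C. tdist M x y \<le> dN x"
proof -
  obtain \<psi> where "\<forall>k. wf_fm af ar (\<psi> k) \<and> fv (\<psi> k) \<subseteq> {..<n}"
    "\<forall>k. \<forall>xs\<in>tuples CN n. \<bar>eval N (\<psi> k) (\<lambda>i. xs ! i) - dN xs\<bar> \<le> inverse (real (Suc k))"
    using D_definable unfolding def_set_def by (auto elim: def_pred_uniform_seq)
  then interpret nearest_point af ar M N n D x \<psi>
    using assms by unfold_locales auto
  show ?thesis by (rule nearest_point_exists)
qed


lemma trace_nonempty: "D \<noteq> {} \<Longrightarrow> C \<noteq> {}"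
proof -
  assume "D \<noteq> {}"
  moreover have "replicate n base_point \<in> tuples CM n"
    using base_point_in_carrier by (auto simp: tuples_def)
  ultimately show "C \<noteq> {}" using nearest_point_in_M by blast
qed

lemma tsetdist_trace_eq:
  assumes xs: "xs \<in> tuples CM n"
  shows "dN xs = dM xs"
proof (cases "D = {}")
  case True
  then show ?thesis using tuple_diameter_M_eq_N by (simp add: tsetdist_def)
next
  case False
  then obtain y where y: "y \<in> C" "tdist M xs y \<le> dN xs" using nearest_point_in_M[OF xs] by blast
  have "dM xs \<le> tdist M xs y" using tsetdist_le_tdist[OF M_struc _ xs y(1)] by blast
  moreover have "dN xs \<le> dM xs"
  proof -
    have "C \<noteq> {}" using y(1) by blast
    moreover have "dN xs \<le> tdist M xs z" if "z \<in> C" for z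
      using tsetdist_le_tdist[OF N_struc D_subset subsetD[OF tuples_subset xs]] tdist_M_eq_N[OF xs] that
      by fastforce
    ultimately have "dN xs \<le> (INF z\<in>C. tdist M xs z)" by (rule cINF_greatest)
    then show ?thesis using \<open>C \<noteq> {}\<close> by (simp add: tsetdist_def)
  qed
  ultimately show ?thesis using y(2) by linarith
qed

lemma trace_definable: "def_set af ar M n C"
  unfolding def_set_def
proof
  show "closed_tuples M n C"
    unfolding closed_tuples_def
  proof (intro conjI ballI impI)
    fix xs assume xs: "xs \<in> tuples CM n" and approx: "\<forall>e>0. \<exists>ys\<in>C. tdist M xs ys < e"
    have "\<exists>ys\<in>D. tdist N xs ys < e" if e: "0 < e" for e
    proof -
      obtain ys where "ys \<in> C" "tdist M xs ys < e" using approx e by blast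
      then show ?thesis using tdist_M_eq_N[OF xs, of ys] by (intro bexI[of _ ys]) auto
    qed
    then have "xs \<in> D"
      using D_definable subsetD[OF tuples_subset xs] by (auto simp: def_set_def closed_tuples_def)
    then show "xs \<in> C" using xs by blast
  qed blast
  show "def_pred af ar M n dM"
    using D_definable tsetdist_trace_eq by (intro def_pred_restrict) (auto simp: def_set_def)
qed

end

section \<open>The expansion by the distance predicate\<close>

fun replace_pred :: "('f, 'r) afm \<Rightarrow> ('f, 'r option) afm \<Rightarrow> ('f, 'r) afm" where
  "replace_pred \<theta> One = One"
| "replace_pred \<theta> (Dst t u) = Dst t u"
| "replace_pred \<theta> (Rel None ts) = inst ts \<theta>"
| "replace_pred \<theta> (Rel (Some r) ts) = Rel r ts"
| "replace_pred \<theta> (Scl c \<phi>) = Scl c (replace_pred \<theta> \<phi>)"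
| "replace_pred \<theta> (Pls \<phi> \<psi>) = Pls (replace_pred \<theta> \<phi>) (replace_pred \<theta> \<psi>)"
| "replace_pred \<theta> (InfQ x \<phi>) = InfQ x (replace_pred \<theta> \<phi>)"
| "replace_pred \<theta> (SupQ x \<phi>) = SupQ x (replace_pred \<theta> \<phi>)"

lemma wf_fm_replace_pred:
  "wf_fm af ar \<theta> \<Longrightarrow> wf_fm af (exp_ar ar n) \<phi> \<Longrightarrow> wf_fm af ar (replace_pred \<theta> \<phi>)"
proof (induction \<phi>)
  case (Rel r ts)
  then show ?case by (cases r) (auto simp: exp_ar_def wf_fm_inst)
qed auto

lemma teval_expand [simp]: "teval (expand S P) = teval S"
proof -
  have "teval (expand S P) \<rho> t = teval S \<rho> t" for \<rho> t
    by (induction t) (auto simp: expand_def intro!: arg_cong[where f="sc_fn S _"])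
  then show ?thesis by (simp add: fun_eq_iff)
qed

lemma expand_simps [simp]:
  "sc_carrier (expand S P) = sc_carrier S" "sc_d (expand S P) = sc_d S"
  "sc_rel (expand S P) None = P" "sc_rel (expand S P) (Some r) = sc_rel S r"
  by (auto simp: expand_def)

context
  fixes af :: "'f \<Rightarrow> nat" and ar :: "'r \<Rightarrow> nat" and S :: "('a, 'f, 'r) struc"
    and n :: nat and \<theta> :: "('f, 'r) afm" and P :: "'a list \<Rightarrow> real" and \<delta> :: real
  assumes S: "is_struc af ar S" and \<theta>: "wf_fm af ar \<theta>" "fv \<theta> \<subseteq> {..<n}"
    and approx: "\<forall>xs\<in>tuples (sc_carrier S) n. \<bar>eval S \<theta> (\<lambda>i. xs ! i) - P xs\<bar> \<le> \<delta>"
begin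

lemma approx_error_nonneg: "0 \<le> \<delta>"
proof -
  obtain a where "a \<in> sc_carrier S" using struc_carrier_nonempty[OF S] by blast
  then have "replicate n a \<in> tuples (sc_carrier S) n" by (auto simp: tuples_def)
  then show ?thesis using approx by force
qed

lemma eval_replace_pred_Rel_approx:
  assumes "wf_fm af (exp_ar ar n) (Rel r ts)" and "range \<rho> \<subseteq> sc_carrier S"
  shows "\<bar>eval (expand S P) (Rel r ts) \<rho> - eval S (replace_pred \<theta> (Rel r ts)) \<rho>\<bar> \<le> \<delta>"
proof (cases r)
  case None
  then have ts: "length ts = n" "\<forall>t\<in>set ts. wf_trm af t" using assms(1) by (auto simp: exp_ar_def)
  have "eval S (inst ts \<theta>) \<rho> = eval S \<theta> (\<lambda>i. map (teval S \<rho>) ts ! i)"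
    using \<theta>(2) ts by (auto simp: eval_inst intro!: eval_cong)
  moreover have "map (teval S \<rho>) ts \<in> tuples (sc_carrier S) n"
    using map_teval_in_tuples[OF S ts(2) assms(2)] ts(1) by simp
  ultimately show ?thesis using approx None by (auto simp: abs_minus_commute)
qed (use approx_error_nonneg in auto)

lemma eval_replace_pred_approx:
  "wf_fm af (exp_ar ar n) \<phi> \<Longrightarrow> range \<rho> \<subseteq> sc_carrier S \<Longrightarrow>
    \<bar>eval (expand S P) \<phi> \<rho> - eval S (replace_pred \<theta> \<phi>) \<rho>\<bar> \<le> fm_bound \<phi> * \<delta>"
proof (induction \<phi> arbitrary: \<rho>)
  case (Rel r ts)
  then show ?case using eval_replace_pred_Rel_approx by simp
next
  case (Scl c \<phi>)
  then have "\<bar>c\<bar> * \<bar>eval (expand S P) \<phi> \<rho> - eval S (replace_pred \<theta> \<phi>) \<rho>\<bar> \<le> \<bar>c\<bar> * (fm_bound \<phi> * \<delta>)"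
    by (intro mult_left_mono) auto
  then show ?case by (simp add: abs_mult[symmetric] algebra_simps)
next
  case (Pls \<phi> \<psi>)
  then have "\<bar>eval (expand S P) \<phi> \<rho> - eval S (replace_pred \<theta> \<phi>) \<rho>\<bar> +
      \<bar>eval (expand S P) \<psi> \<rho> - eval S (replace_pred \<theta> \<psi>) \<rho>\<bar> \<le> fm_bound \<phi> * \<delta> + fm_bound \<psi> * \<delta>"
    by (intro add_mono) auto
  then show ?case by (auto simp: distrib_right intro: order.trans[OF abs_diff_triangle_ineq])
next
  case (InfQ x \<phi>)
  have wf: "wf_fm af ar (replace_pred \<theta> \<phi>)" using InfQ.prems(1) \<theta>(1) by (simp add: wf_fm_replace_pred)
  have "\<bar>eval (expand S P) \<phi> (\<rho>(x := a)) - eval S (replace_pred \<theta> \<phi>) (\<rho>(x := a))\<bar> \<le> fm_bound \<phi> * \<delta>"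
    and "\<bar>eval S (replace_pred \<theta> \<phi>) (\<rho>(x := a))\<bar> \<le> fm_bound (replace_pred \<theta> \<phi>)"
    if "a \<in> sc_carrier S" for a
    using InfQ range_fun_upd_subset[OF InfQ.prems(2) that] abs_eval_le_fm_bound[OF S wf] by auto
  then have "\<bar>(INF a\<in>sc_carrier S. eval (expand S P) \<phi> (\<rho>(x := a))) -
      (INF a\<in>sc_carrier S. eval S (replace_pred \<theta> \<phi>) (\<rho>(x := a)))\<bar> \<le> fm_bound \<phi> * \<delta>"
    by (rule INF_approx[OF struc_carrier_nonempty[OF S]])
  then show ?case by simp
next
  case (SupQ x \<phi>)
  have wf: "wf_fm af ar (replace_pred \<theta> \<phi>)" using SupQ.prems(1) \<theta>(1) by (simp add: wf_fm_replace_pred)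
  have "\<bar>eval (expand S P) \<phi> (\<rho>(x := a)) - eval S (replace_pred \<theta> \<phi>) (\<rho>(x := a))\<bar> \<le> fm_bound \<phi> * \<delta>"
    and "\<bar>eval S (replace_pred \<theta> \<phi>) (\<rho>(x := a))\<bar> \<le> fm_bound (replace_pred \<theta> \<phi>)"
    if "a \<in> sc_carrier S" for a
    using SupQ range_fun_upd_subset[OF SupQ.prems(2) that] abs_eval_le_fm_bound[OF S wf] by auto
  then have "\<bar>(SUP a\<in>sc_carrier S. eval (expand S P) \<phi> (\<rho>(x := a))) -
      (SUP a\<in>sc_carrier S. eval S (replace_pred \<theta> \<phi>) (\<rho>(x := a)))\<bar> \<le> fm_bound \<phi> * \<delta>"
    by (rule SUP_approx[OF struc_carrier_nonempty[OF S]])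
  then show ?case by simp
qed (use approx_error_nonneg in auto)

end

lemma eq_of_dist_le_inverse_Suc:
  fixes a b c :: real
  assumes "\<And>k. \<bar>a - b\<bar> \<le> c * inverse (real (Suc k))"
  shows "a = b"
proof -
  have "(\<lambda>k. c * inverse (real (Suc k))) \<longlonglongrightarrow> 0"
    by (rule tendsto_mult_right_zero[OF LIMSEQ_inverse_real_of_nat])
  then have "\<bar>a - b\<bar> \<le> 0" by (rule LIMSEQ_le_const) (use assms in blast)
  then show ?thesis by simp
qed

context definable_in_extension
begin

lemma expansion_elementary: "elem_ext af (exp_ar ar n) (expand M dM) (expand N dN)"
  unfolding elem_ext_def
proof (intro conjI allI impI)
  show "sc_carrier (expand M dM) \<subseteq> sc_carrier (expand N dN)" using carrier_subset by simp
  fix \<phi> :: "('f, 'r option) afm" and \<rho> :: "nat \<Rightarrow> 'a"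
  assume "wf_fm af (exp_ar ar n) \<phi> \<and> range \<rho> \<subseteq> sc_carrier (expand M dM)"
  then have \<phi>: "wf_fm af (exp_ar ar n) \<phi>" and \<rho>: "range \<rho> \<subseteq> CM" by auto
  obtain \<psi> where \<psi>: "\<forall>k. wf_fm af ar (\<psi> k) \<and> fv (\<psi> k) \<subseteq> {..<n}"
    and approx_N: "\<forall>k. \<forall>xs\<in>tuples CN n. \<bar>eval N (\<psi> k) (\<lambda>i. xs ! i) - dN xs\<bar> \<le> inverse (real (Suc k))"
    using D_definable unfolding def_set_def by (auto elim: def_pred_uniform_seq)
  have approx_M: "\<forall>xs\<in>tuples CM n. \<bar>eval M (\<psi> k) (\<lambda>i. xs ! i) - dM xs\<bar> \<le> inverse (real (Suc k))" for k
  proof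
    fix xs assume xs: "xs \<in> tuples CM n"
    then have "eval M (\<psi> k) (\<lambda>i. xs ! i) = eval N (\<psi> k) (\<lambda>i. xs ! i)"
      using \<psi> by (intro eval_tuple_M_eq_N) auto
    then show "\<bar>eval M (\<psi> k) (\<lambda>i. xs ! i) - dM xs\<bar> \<le> inverse (real (Suc k))"
      using approx_N[rule_format, OF subsetD[OF tuples_subset xs], of k] tsetdist_trace_eq[OF xs] by simp
  qed
  have "\<bar>eval (expand M dM) \<phi> \<rho> - eval (expand N dN) \<phi> \<rho>\<bar> \<le> (2 * fm_bound \<phi>) * inverse (real (Suc k))" for k
  proof -
    have "\<bar>eval (expand M dM) \<phi> \<rho> - eval M (replace_pred (\<psi> k) \<phi>) \<rho>\<bar> \<le> fm_bound \<phi> * inverse (real (Suc k))"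
      using eval_replace_pred_approx[OF M_struc _ _ approx_M \<phi> \<rho>] \<psi> by blast
    moreover have "\<bar>eval (expand N dN) \<phi> \<rho> - eval N (replace_pred (\<psi> k) \<phi>) \<rho>\<bar> \<le> fm_bound \<phi> * inverse (real (Suc k))"
      using eval_replace_pred_approx[OF N_struc _ _ _ \<phi>] \<psi> approx_N \<rho> carrier_subset by blast
    moreover have "eval M (replace_pred (\<psi> k) \<phi>) \<rho> = eval N (replace_pred (\<psi> k) \<phi>) \<rho>"
      using \<psi> \<phi> \<rho> by (intro eval_M_eq_N wf_fm_replace_pred) auto
    ultimately show ?thesis by (simp add: abs_le_iff)
  qed
  then show "eval (expand M dM) \<phi> \<rho> = eval (expand N dN) \<phi> \<rho>" by (rule eq_of_dist_le_inverse_Suc)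
qed

end

theorem mainTheorem16:
  fixes af :: "'f \<Rightarrow> nat" and ar :: "'r \<Rightarrow> nat"
    and M N :: "('a, 'f, 'r) struc" and n :: nat and D :: "'a list set"
  assumes "is_struc af ar M" and "is_struc af ar N"
    and "elem_ext af ar M N"
    and "ext_sat af ar M"
    and "def_set af ar N n D"
  shows "def_set af ar M n (D \<inter> tuples (sc_carrier M) n)
      \<and> (\<forall>xs\<in>tuples (sc_carrier M) n.
            tsetdist N n D xs = tsetdist M n (D \<inter> tuples (sc_carrier M) n) xs)
      \<and> elem_ext af (exp_ar ar n)
          (expand M (tsetdist M n (D \<inter> tuples (sc_carrier M) n)))
          (expand N (tsetdist N n D))
      \<and> (D \<noteq> {} \<longrightarrow> D \<inter> tuples (sc_carrier M) n \<noteq> {})"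
proof -
  interpret definable_in_extension af ar M N n D
    using assms by unfold_locales
  show ?thesis
    using trace_definable tsetdist_trace_eq expansion_elementary trace_nonempty by blast
qed

end
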